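(* For every $m\ge1$, $\dim\mathcal{H}_{(m)}=\frac{1}{m^2}\sum_{d\mid m}\varphi(d)^2\,\big(\tfrac md\big)!\,d^{m/d}$, where $\varphi$ is Euler's totient function.
   Context: $\mathcal{H}_{(m)}$ is the quotient of the span in $\mathbb{C}[\mathbb{S}_m]$ of all $m$-cycles (permutations consisting of a single cycle of length $m$) by the span of those generalized Vassiliev elements all of whose terms are $m$-cycles. Generalized Vassiliev elements: for $m\ge2$, $\gamma\in\mathbb{S}_{m-1}$, $q\in[m-1]\cup\{*\}$ and $t\in\{0,\dots,m-1\}$, $\alpha_t\in\mathbb{S}_m$ is obtained by inserting a new point $x$ into the line $1<\dots<m-1$ in the gap between $t$ and $t+1$, relabeling in order, acting as $\gamma$ on old points except $q\mapsto x\mapsto\gamma(q)$ if $q\ne*$, $x$ fixed if $q=*$; for a cycle $v$ of $\gamma$, $E(\gamma,q,v)=\sum_{j\in v}(\alpha_{j-1}-\alpha_j)$. (Equivalently, $\dim\mathcal{H}_{(m)}$ is the number of orbits of the action of $\mathbb{Z}/m$ on the set of $m$-cycles in $\mathbb{S}_m$ by conjugation with powers of $(1,2,\dots,m)$.) *)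

theory Defs
  imports Complex_Main "HOL-Library.Function_Algebras" "HOL-Combinatorics.Permutations"
    "HOL-Number_Theory.Totient"
begin

text \<open>The group algebra C[S_m]: complex-valued functions on permutations of nat
  (permutations of [m] = {1..m} are the functions p with p permutes {1..m}).
  Scalar multiplication is pointwise.\<close>

type_synonym galg = "(nat \<Rightarrow> nat) \<Rightarrow> complex"

definition gscale :: "complex \<Rightarrow> galg \<Rightarrow> galg" where
  "gscale c f = (\<lambda>x. c * f x)"

definition gvec :: "(nat \<Rightarrow> nat) \<Rightarrow> galg" where
  "gvec p = (\<lambda>s. if s = p then 1 else 0)"

definition is_mcycle :: "nat \<Rightarrow> (nat \<Rightarrow> nat) \<Rightarrow> bool" where
  "is_mcycle m p \<longleftrightarrow> p permutes {1..m} \<and>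
     (\<forall>x\<in>{1..m}. \<forall>y\<in>{1..m}. \<exists>k. (p ^^ k) x = y)"

definition mcycles :: "nat \<Rightarrow> (nat \<Rightarrow> nat) set" where
  "mcycles m = {p. is_mcycle m p}"

text \<open>Relabelling of the old points after inserting a new point in the gap
  between t and t+1: old i \<le> t stays i, old i > t becomes i+1; the new point is t+1.\<close>
definition ins_shift :: "nat \<Rightarrow> nat \<Rightarrow> nat" where
  "ins_shift t i = (if i \<le> t then i else Suc i)"

text \<open>alpha_t for gamma in S_(m-1) and q in [m-1] (Some q) or q = * (None).\<close>
definition valpha :: "(nat \<Rightarrow> nat) \<Rightarrow> nat option \<Rightarrow> nat \<Rightarrow> nat \<Rightarrow> nat" where
  "valpha \<gamma> q t y =
     (if y = Suc t then (case q of None \<Rightarrow> Suc t | Some q' \<Rightarrow> ins_shift t (\<gamma> q'))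
      else (let i = (if y \<le> t then y else y - 1) in
            if q = Some i then Suc t else ins_shift t (\<gamma> i)))"

definition perm_cycles :: "nat \<Rightarrow> (nat \<Rightarrow> nat) \<Rightarrow> nat set set" where
  "perm_cycles n \<gamma> = {{(\<gamma> ^^ k) j | k. True} | j. j \<in> {1..n}}"

definition vass_elt :: "(nat \<Rightarrow> nat) \<Rightarrow> nat option \<Rightarrow> nat set \<Rightarrow> galg" where
  "vass_elt \<gamma> q v = (\<Sum>j\<in>v. gvec (valpha \<gamma> q (j - 1)) - gvec (valpha \<gamma> q j))"

definition vass_cyc_elts :: "nat \<Rightarrow> galg set" where
  "vass_cyc_elts m = {vass_elt \<gamma> q v | \<gamma> q v.
      2 \<le> m \<and> \<gamma> permutes {1..m-1} \<and> (q = None \<or> (\<exists>i\<in>{1..m-1}. q = Some i)) \<and>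
      v \<in> perm_cycles (m-1) \<gamma> \<and>
      (\<forall>j\<in>v. valpha \<gamma> q (j - 1) \<in> mcycles m \<and> valpha \<gamma> q j \<in> mcycles m)}"

text \<open>dim H_(m): dimension of span(m-cycles) / span(Vassiliev elements whose terms
  are all m-cycles). The second space is a subspace of the first, so the dimension of
  the quotient is the difference of the (finite) complex dimensions.\<close>
definition dim_H :: "nat \<Rightarrow> nat" where
  "dim_H m = vector_space.dim gscale (module.span gscale (gvec ` mcycles m))
            - vector_space.dim gscale (module.span gscale (vass_cyc_elts m))"

end

(*
  A generalized Vassiliev element E(\<gamma>,q,v) all of whose terms are m-cycles telescopes to
  c s c\<inverse> - s, where c = (1 2 ... m) and s = \<alpha>_(m-1) is an m-cycle: q cannot be *, the
  cycle v is all of [m-1] because \<gamma> is transitive, and \<alpha>_0 = c \<alpha>_(m-1) c\<inverse>.  Conversely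
  every m-cycle is such an \<alpha>_(m-1).  Hence H_(m) is the space of coinvariants of the
  conjugation action of \<langle>c\<rangle> = \<int>/m on the m-cycles, its dimension is the number of orbits,
  and by Burnside's lemma this is (1/m) \<Sum>\<^sub>k |Fix(c^k)|.

  To count the m-cycles commuting with c^k, count the pairs (s, f) with s = f c f\<inverse>: each
  m-cycle has exactly m such f, and s commutes with c^k iff f\<inverse> c^k f = c^j for some j.
  The set of f with c^k f = f c^j is empty unless gcd(k,m) = gcd(j,m) = g, and otherwise a
  coset of the centralizer of c^g; as c^g has g cycles of length d = m/g, its centralizer
  consists of a permutation of the cycles combined with a rotation of each cycle, g! d^g
  elements in total.  Grouping k and j by gcd(\<cdot>,m) with Euler's totient yields the formula.
*)

theory Submission
  imports
    Defs
    "HOL-Algebra.Group_Action"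
    "HOL-Algebra.Elementary_Groups"
    "HOL-Combinatorics.Cycles"
    "HOL-Combinatorics.Orbits"
begin

(* HOL-Algebra's group-inverse syntax would capture inv, and orbit is meant for group actions. *)
unbundle no m_inv_syntax
hide_const (open) Orbits.orbit

section \<open>The group algebra and quotients by differences\<close>

interpretation galg: vector_space gscale
  by unfold_locales (auto simp: gscale_def algebra_simps fun_eq_iff)

lemma sum_apply: "sum f A x = (\<Sum>a\<in>A. f a x)"
  by (induction A rule: infinite_finite_induct) auto

lemma galg_independentI:
  assumes "\<And>v. v \<in> V \<Longrightarrow> \<exists>x. \<forall>w\<in>V. w x = (if w = v then 1 else 0)"
  shows "galg.independent V"
proof
  assume "galg.dependent V"
  then obtain t u v where t: "finite t" "t \<subseteq> V" "(\<Sum>w\<in>t. gscale (u w) w) = 0"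
    and v: "v \<in> t" "u v \<noteq> 0"
    unfolding galg.dependent_explicit by blast
  obtain x where "\<forall>w\<in>V. w x = (if w = v then 1 else 0)" using assms v t by blast
  then have x: "\<forall>w\<in>t. w x = (if w = v then 1 else 0)" using t by blast
  have "0 = (\<Sum>w\<in>t. gscale (u w) w) x" using t by simp
  also have "\<dots> = (\<Sum>w\<in>t. if w = v then u v else 0)"
    unfolding sum_apply gscale_def using x by (intro sum.cong) auto
  also have "\<dots> = u v" using t v by simp
  finally show False using v by simp
qed

lemma gvec_apply: "gvec p s = (if s = p then 1 else 0)"
  by (simp add: gvec_def)

lemma gvec_eq_iff [simp]: "gvec s = gvec t \<longleftrightarrow> s = t"
  by (auto simp: gvec_def fun_eq_iff split: if_splits)

lemma dim_span_gvec:
  assumes "finite A" shows "galg.dim (galg.span (gvec ` A)) = card A"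
proof -
  have "galg.independent (gvec ` A)"
  proof (rule galg_independentI)
    fix v assume "v \<in> gvec ` A"
    then obtain s where "v = gvec s" by blast
    then show "\<exists>x. \<forall>w\<in>gvec ` A. w x = (if w = v then 1 else 0)"
      by (intro exI[of _ s]) (auto simp: gvec_apply)
  qed
  then show ?thesis
    by (simp add: galg.dim_eq_card_independent card_image inj_on_def)
qed

lemma dim_span_gvec_quotient:
  assumes "finite C" and rep_in: "rep ` C \<subseteq> C" and rep_idem: "\<And>x. x \<in> C \<Longrightarrow> rep (rep x) = rep x"
  shows "galg.dim (galg.span (gvec ` C)) - galg.dim (galg.span ((\<lambda>x. gvec x - gvec (rep x)) ` C))
           = card (rep ` C)"
proof -
  define b where "b x = gvec x - gvec (rep x)" for x
  let ?N = "C - rep ` C"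
  \<comment> \<open>the vectors b x with x not a representative form a basis of the second space\<close>
  have b_at: "b y x = (if y = x then 1 else 0)" if "x \<in> ?N" "y \<in> ?N" for x y
    using that by (auto simp: b_def gvec_apply)
  have inj: "inj_on b ?N"
    by (rule inj_onI) (metis b_at zero_neq_one)
  have indep: "galg.independent (b ` ?N)"
  proof (rule galg_independentI)
    fix v assume "v \<in> b ` ?N"
    then obtain y where "y \<in> ?N" "v = b y" by blast
    then show "\<exists>x. \<forall>w\<in>b ` ?N. w x = (if w = v then 1 else 0)"
      by (intro exI[of _ y]) (auto simp: b_at inj_on_eq_iff[OF inj])
  qed
  have "b x \<in> galg.span (b ` ?N)" if "x \<in> C" for x
  proof (cases "x \<in> rep ` C")
    case True
    then have "b x = 0" using rep_idem by (auto simp: b_def)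
    then show ?thesis by (simp add: galg.span_zero)
  qed (use that in \<open>auto intro: galg.span_base\<close>)
  then have "b ` C \<subseteq> galg.span (b ` ?N)" by blast
  then have "galg.span (b ` C) = galg.span (b ` ?N)"
    by (auto intro!: galg.span_eq[THEN iffD2] galg.span_base)
  then have "galg.dim (galg.span (b ` C)) = card ?N"
    using indep galg.dim_span_eq_card_independent card_image[OF inj] by metis
  also have "\<dots> = card C - card (rep ` C)"
    using assms(1) rep_in by (simp add: card_Diff_subset finite_subset)
  finally show ?thesis
    using dim_span_gvec[OF assms(1)] card_mono[OF assms(1) rep_in] by (simp add: b_def)
qed

(* Applied by rule: the simplifier would expand differences in galg pointwise. *)
lemma diff_eq_diff_minus_diff: "(a::'a::ab_group_add) - c = (a - b) - (c - b)"
  by simp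

lemma span_gvec_step_differences:
  assumes step: "\<sigma> ` C \<subseteq> C"
    and rep_step: "\<And>x. x \<in> C \<Longrightarrow> rep (\<sigma> x) = rep x"
    and rep_funpow: "\<And>x. x \<in> C \<Longrightarrow> \<exists>k. rep x = (\<sigma> ^^ k) x"
  shows "galg.span ((\<lambda>x. gvec (\<sigma> x) - gvec x) ` C) = galg.span ((\<lambda>x. gvec x - gvec (rep x)) ` C)"
    (is "galg.span ?D = galg.span ?B")
proof -
  have D_in: "gvec (\<sigma> x) - gvec x \<in> galg.span ?B" if "x \<in> C" for x
  proof -
    have "gvec (\<sigma> x) - gvec x = (gvec (\<sigma> x) - gvec (rep (\<sigma> x))) - (gvec x - gvec (rep x))"
      unfolding rep_step[OF that] by (rule diff_eq_diff_minus_diff)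
    also have "\<dots> \<in> galg.span ?B"
      using that step by (intro galg.span_diff galg.span_base) auto
    finally show ?thesis .
  qed
  have B_in: "gvec x - gvec ((\<sigma> ^^ k) x) \<in> galg.span ?D" if "x \<in> C" for x k
  proof (induction k)
    case (Suc k)
    have "(\<sigma> ^^ k) x \<in> C" using that step by (induction k) auto
    then have "gvec (\<sigma> ((\<sigma> ^^ k) x)) - gvec ((\<sigma> ^^ k) x) \<in> galg.span ?D"
      by (auto intro: galg.span_base)
    with Suc have "(gvec x - gvec ((\<sigma> ^^ k) x)) - (gvec (\<sigma> ((\<sigma> ^^ k) x)) - gvec ((\<sigma> ^^ k) x))
        \<in> galg.span ?D"
      by (rule galg.span_diff)
    then show ?case by (simp only: funpow.simps(2) comp_apply diff_eq_diff_minus_diff[symmetric])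
  qed (simp only: funpow.simps(1) id_apply diff_self galg.span_zero)
  have "?B \<subseteq> galg.span ?D"
  proof
    fix v assume "v \<in> ?B"
    then obtain x where x: "x \<in> C" "v = gvec x - gvec (rep x)" by blast
    then obtain k where "rep x = (\<sigma> ^^ k) x" using rep_funpow by blast
    then show "v \<in> galg.span ?D" using B_in[OF x(1), of k] x(2) by simp
  qed
  moreover have "?D \<subseteq> galg.span ?B" by (rule image_subsetI) (rule D_in)
  ultimately show ?thesis by (intro galg.span_eq[THEN iffD2] conjI)
qed

section \<open>Cyclic group actions and Burnside's lemma\<close>

lemma (in group_action) orbit_eq_if_mem:
  assumes "x \<in> E" "y \<in> orbit G \<phi> x" shows "orbit G \<phi> y = orbit G \<phi> x"
proof -
  have sub: "orbit G \<phi> x \<subseteq> E" if "x \<in> E" for x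
    using that element_image by (auto simp: Group_Action.orbit_def)
  have "y \<in> E" using assms sub by blast
  then show ?thesis
    using assms sub orbit_sym orbit_trans by blast
qed

lemma (in group_action) card_orbit_reps:
  "card ((\<lambda>x. SOME y. y \<in> orbit G \<phi> x) ` E) = card (orbits G E \<phi>)"
proof -
  let ?rep = "\<lambda>x. SOME y. y \<in> orbit G \<phi> x"
  have orbit_rep: "orbit G \<phi> (?rep x) = orbit G \<phi> x" if "x \<in> E" for x
    using orbit_refl[OF that] by (intro orbit_eq_if_mem[OF that]) (rule someI)
  have "bij_betw (orbit G \<phi>) (?rep ` E) (orbits G E \<phi>)"
  proof (rule bij_betw_imageI)
    show "inj_on (orbit G \<phi>) (?rep ` E)"
      by (rule inj_onI) (auto simp: orbit_rep)
    have "orbit G \<phi> ` ?rep ` E = orbit G \<phi> ` E"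
      unfolding image_image by (rule image_cong) (simp_all add: orbit_rep)
    then show "orbit G \<phi> ` ?rep ` E = orbits G E \<phi>"
      by (auto simp: orbits_def)
  qed
  then show ?thesis by (rule bij_betw_same_card)
qed

(* The action of \<int>/n on C by powers of \<sigma>, made extensional as BijGroup requires. *)
definition cyclic_action :: "('a \<Rightarrow> 'a) \<Rightarrow> 'a set \<Rightarrow> int \<Rightarrow> 'a \<Rightarrow> 'a" where
  "cyclic_action \<sigma> C k = restrict (\<sigma> ^^ nat k) C"

context
  fixes n :: nat and \<sigma> :: "'a \<Rightarrow> 'a" and C :: "'a set"
  assumes n: "0 < n" and step: "\<sigma> ` C \<subseteq> C" and period: "\<And>x. x \<in> C \<Longrightarrow> (\<sigma> ^^ n) x = x"
begin

lemma funpow_closed [simp]: "x \<in> C \<Longrightarrow> (\<sigma> ^^ k) x \<in> C"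
  using step by (induction k) auto

lemma funpow_mod_period: "x \<in> C \<Longrightarrow> (\<sigma> ^^ (k mod n)) x = (\<sigma> ^^ k) x"
  using period by (rule funpow_mod_eq)

lemma bij_betw_funpow_period: "bij_betw (\<sigma> ^^ k) C C"
proof -
  have "bij_betw \<sigma> C C"
  proof (rule bij_betw_byWitness[where f' = "\<sigma> ^^ (n - 1)"])
    have "\<sigma> ^^ n = \<sigma> ^^ (n - 1) \<circ> \<sigma>" "\<sigma> ^^ n = \<sigma> \<circ> \<sigma> ^^ (n - 1)"
      using n by (metis Suc_diff_1 funpow_Suc_right funpow.simps(2))+
    then show "\<forall>x\<in>C. (\<sigma> ^^ (n - 1)) (\<sigma> x) = x" "\<forall>x\<in>C. \<sigma> ((\<sigma> ^^ (n - 1)) x) = x"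
      using period by (metis comp_apply)+
    show "\<sigma> ` C \<subseteq> C" by (rule step)
    show "(\<sigma> ^^ (n - 1)) ` C \<subseteq> C" by auto
  qed
  then show ?thesis by (rule bij_betw_funpow)
qed

lemma group_action_cyclic: "group_action (integer_mod_group n) C (cyclic_action \<sigma> C)"
  unfolding group_action_def group_hom_def group_hom_axioms_def
proof (intro conjI group_integer_mod_group group_BijGroup homI)
  have Bij: "cyclic_action \<sigma> C k \<in> Bij C" for k
    using bij_betw_funpow_period
    by (simp add: cyclic_action_def Bij_def bij_betw_cong[of C "restrict _ C"])
  then show "cyclic_action \<sigma> C k \<in> carrier (BijGroup C)" for k
    by (simp add: BijGroup_def)
  fix k l assume "k \<in> carrier (integer_mod_group n)" "l \<in> carrier (integer_mod_group n)"
  then have "nat ((k + l) mod int n) = (nat k + nat l) mod n"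
    using n by (simp add: carrier_integer_mod_group nat_mod_distrib nat_add_distrib)
  then have "(\<sigma> ^^ nat ((k + l) mod int n)) x = (\<sigma> ^^ nat k) ((\<sigma> ^^ nat l) x)" if "x \<in> C" for x
    using funpow_mod_period[OF that] by (simp add: funpow_add)
  then show "cyclic_action \<sigma> C (k \<otimes>\<^bsub>integer_mod_group n\<^esub> l)
      = cyclic_action \<sigma> C k \<otimes>\<^bsub>BijGroup C\<^esub> cyclic_action \<sigma> C l"
    using Bij by (intro ext) (simp add: BijGroup_def compose_def cyclic_action_def)
qed

lemma orbit_cyclic_action:
  assumes "x \<in> C" shows "orbit (integer_mod_group n) (cyclic_action \<sigma> C) x = {(\<sigma> ^^ k) x | k. k < n}"
proof -
  have "\<exists>k\<in>{0..<int n}. nat k = j" if "j < n" for j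
    using that by (intro bexI[of _ "int j"]) auto
  then show ?thesis
    using assms n by (force simp: Group_Action.orbit_def cyclic_action_def carrier_integer_mod_group)
qed

lemma burnside_cyclic:
  assumes "finite C"
  shows "card (orbits (integer_mod_group n) C (cyclic_action \<sigma> C)) * n
           = (\<Sum>k<n. card {x \<in> C. (\<sigma> ^^ k) x = x})"
proof -
  interpret group_action "integer_mod_group n" C "cyclic_action \<sigma> C"
    by (rule group_action_cyclic)
  have "order (integer_mod_group n) = n"
    using n by (simp add: order_def carrier_integer_mod_group)
  moreover have "(\<Sum>g\<in>carrier (integer_mod_group n). card (invariants C (cyclic_action \<sigma> C) g))
      = (\<Sum>k<n. card {x \<in> C. (\<sigma> ^^ k) x = x})"
    using n by (intro sum.reindex_bij_witness[of _ int nat])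
      (auto simp: carrier_integer_mod_group invariants_def cyclic_action_def
        intro!: arg_cong[where f = card])
  ultimately show ?thesis
    using burnside assms n by (simp add: carrier_integer_mod_group)
qed

end

lemma dim_span_gvec_step_differences:
  assumes n: "0 < n" and step: "\<sigma> ` C \<subseteq> C" and period: "\<And>x. x \<in> C \<Longrightarrow> (\<sigma> ^^ n) x = x"
    and "finite C"
  shows "galg.dim (galg.span (gvec ` C)) - galg.dim (galg.span ((\<lambda>x. gvec (\<sigma> x) - gvec x) ` C))
           = card (orbits (integer_mod_group n) C (cyclic_action \<sigma> C))"
proof -
  interpret group_action "integer_mod_group n" C "cyclic_action \<sigma> C"
    by (rule group_action_cyclic[OF n step period])
  let ?orbit = "orbit (integer_mod_group n) (cyclic_action \<sigma> C)"
  define rep where "rep x = (SOME y. y \<in> ?orbit x)" for x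
  have rep_in: "rep x \<in> ?orbit x" if "x \<in> C" for x
    unfolding rep_def using orbit_refl[OF that] by (rule someI[where P = "\<lambda>y. y \<in> ?orbit x"])
  have "rep (\<sigma> x) = rep x" if "x \<in> C" for x
  proof -
    have "\<sigma> x \<in> ?orbit x"
    proof (cases "n = 1")
      case True
      then show ?thesis using period[OF that] orbit_refl[OF that] by simp
    next
      case False
      then have "1 < n" using n by simp
      then show ?thesis
        by (auto simp: orbit_cyclic_action[OF n step period that] intro: exI[of _ 1])
    qed
    then show ?thesis unfolding rep_def using orbit_eq_if_mem[OF that] by simp
  qed
  moreover have "\<exists>k. rep x = (\<sigma> ^^ k) x" if "x \<in> C" for x
    using rep_in[OF that] orbit_cyclic_action[OF n step period that] by auto
  ultimately have span: "galg.span ((\<lambda>x. gvec (\<sigma> x) - gvec x) ` C) = galg.span ((\<lambda>x. gvec x - gvec (rep x)) ` C)"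
    by (rule span_gvec_step_differences[OF step])
  have "rep x \<in> C" if "x \<in> C" for x
    using rep_in[OF that] orbit_cyclic_action[OF n step period that] funpow_closed[OF n step period that]
    by auto
  moreover have "rep (rep x) = rep x" if "x \<in> C" for x
  proof -
    have "rep (rep x) = (SOME y. y \<in> ?orbit (rep x))" by (rule rep_def)
    also have "\<dots> = rep x" unfolding orbit_eq_if_mem[OF that rep_in[OF that]] by (rule rep_def[symmetric])
    finally show ?thesis .
  qed
  ultimately have "galg.dim (galg.span (gvec ` C)) - galg.dim (galg.span ((\<lambda>x. gvec (\<sigma> x) - gvec x) ` C))
      = card (rep ` C)"
    unfolding span using funpow_closed[OF n step period] by (intro dim_span_gvec_quotient assms(4)) auto
  also have "\<dots> = card (orbits (integer_mod_group n) C (cyclic_action \<sigma> C))"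
    unfolding rep_def by (rule card_orbit_reps)
  finally show ?thesis .
qed

section \<open>The standard m-cycle\<close>

lemma funpow_intertwine:
  assumes "t \<circ> f = f \<circ> s" shows "t ^^ k \<circ> f = f \<circ> s ^^ k"
proof (induction k)
  case (Suc k)
  have "t ^^ Suc k \<circ> f = t \<circ> (t ^^ k \<circ> f)" by (simp add: comp_assoc)
  also have "\<dots> = (t \<circ> f) \<circ> s ^^ k" by (simp only: Suc comp_assoc)
  also have "\<dots> = f \<circ> s ^^ Suc k" by (simp only: assms comp_assoc funpow.simps(2))
  finally show ?case .
qed simp

lemma funpow_intertwine_apply: "t \<circ> f = f \<circ> s \<Longrightarrow> (t ^^ k) (f x) = f ((s ^^ k) x)"
  using funpow_intertwine by (metis comp_apply)

lemma permutes_comp_cancel_right: "f permutes S \<Longrightarrow> a \<circ> f = b \<circ> f \<longleftrightarrow> a = b"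
  by (metis comp_assoc comp_id permutes_inv_o(1))

lemma permutes_comp_cancel_left: "f permutes S \<Longrightarrow> f \<circ> a = f \<circ> b \<longleftrightarrow> a = b"
  by (metis comp_assoc id_comp permutes_inv_o(2))

lemma permutes_intertwine_inv:
  assumes "f permutes S" "t \<circ> f = f \<circ> s" shows "inv f \<circ> t = s \<circ> inv f"
  by (metis assms comp_assoc comp_id id_comp permutes_inv_o)

definition std_cycle :: "nat \<Rightarrow> nat \<Rightarrow> nat" where
  "std_cycle m x = (if x \<in> {1..m} then Suc (x mod m) else x)"

lemma atLeastAtMost_1E:
  assumes "x \<in> {1..m}" obtains i where "i < m" "x = Suc i"
  using assms by (cases x) auto

lemma std_cycle_funpow: "i < m \<Longrightarrow> (std_cycle m ^^ k) (Suc i) = Suc ((i + k) mod m)"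
  by (induction k) (auto simp: std_cycle_def mod_Suc_eq Suc_leI)

lemma std_cycle_funpow_outside: "x \<notin> {1..m} \<Longrightarrow> (std_cycle m ^^ k) x = x"
  by (induction k) (auto simp: std_cycle_def)

lemma std_cycle_funpow_eq_iff:
  assumes "0 < m" shows "std_cycle m ^^ a = std_cycle m ^^ b \<longleftrightarrow> a mod m = b mod m"
proof
  assume "std_cycle m ^^ a = std_cycle m ^^ b"
  then have "(std_cycle m ^^ a) (Suc 0) = (std_cycle m ^^ b) (Suc 0)" by simp
  then show "a mod m = b mod m" using assms by (simp add: std_cycle_funpow)
next
  assume "a mod m = b mod m"
  then have "(i + a) mod m = (i + b) mod m" for i by (metis mod_add_right_eq)
  then have "(std_cycle m ^^ a) x = (std_cycle m ^^ b) x" for x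
  proof (cases "x \<in> {1..m}")
    case True
    then obtain i where "i < m" "x = Suc i" by (rule atLeastAtMost_1E)
    then show ?thesis using \<open>\<And>i. (i + a) mod m = (i + b) mod m\<close> by (simp add: std_cycle_funpow)
  qed (simp add: std_cycle_funpow_outside)
  then show "std_cycle m ^^ a = std_cycle m ^^ b" by (rule ext)
qed

lemma std_cycle_funpow_eq_id_iff: "0 < m \<Longrightarrow> std_cycle m ^^ a = id \<longleftrightarrow> m dvd a"
  using std_cycle_funpow_eq_iff[of m a 0] by (simp add: dvd_eq_mod_eq_0)

lemma std_cycle_funpow_pred_comp:
  assumes "0 < m"
  shows "std_cycle m ^^ (m - 1) \<circ> std_cycle m = id" "std_cycle m \<circ> std_cycle m ^^ (m - 1) = id"
proof -
  have "std_cycle m ^^ m = id" using assms by (simp add: std_cycle_funpow_eq_id_iff)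
  then show "std_cycle m ^^ (m - 1) \<circ> std_cycle m = id" "std_cycle m \<circ> std_cycle m ^^ (m - 1) = id"
    using assms by (metis Suc_diff_1 funpow_Suc_right funpow.simps(2))+
qed

lemma std_cycle_permutes: "std_cycle m permutes {1..m}"
proof (cases "m = 0")
  case False
  then have "bij (std_cycle m)" using std_cycle_funpow_pred_comp by (intro o_bij) auto
  then show ?thesis
    unfolding permutes_def by (auto simp: std_cycle_def bij_iff)
next
  case True
  then have "std_cycle m = id" by (auto simp: std_cycle_def)
  then show ?thesis by (simp add: permutes_id)
qed

lemma std_cycle_funpow_permutes: "(std_cycle m ^^ k) permutes {1..m}"
  by (rule permutes_funpow[OF std_cycle_permutes])

lemma is_mcycle_std_cycle:
  assumes "0 < m" shows "is_mcycle m (std_cycle m)"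
  unfolding is_mcycle_def
proof (intro conjI ballI std_cycle_permutes)
  fix x y assume "x \<in> {1..m}" "y \<in> {1..m}"
  then obtain i j where ij: "i < m" "j < m" "x = Suc i" "y = Suc j"
    by (elim atLeastAtMost_1E)
  then have "(std_cycle m ^^ (j + m - i)) x = y"
    by (simp add: std_cycle_funpow)
  then show "\<exists>k. (std_cycle m ^^ k) x = y" by blast
qed

lemma commutes_std_cycle_iff:
  assumes m: "0 < m" and h: "h permutes {1..m}"
  shows "h \<circ> std_cycle m = std_cycle m \<circ> h \<longleftrightarrow> (\<exists>j<m. h = std_cycle m ^^ j)"
proof
  assume hc: "h \<circ> std_cycle m = std_cycle m \<circ> h"
  have "h (Suc 0) \<in> {1..m}" using permutes_in_image[OF h, of "Suc 0"] m by simp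
  then obtain j where j: "j < m" "h (Suc 0) = Suc j" by (rule atLeastAtMost_1E)
  have "h x = (std_cycle m ^^ j) x" for x
  proof (cases "x \<in> {1..m}")
    case True
    then obtain i where i: "i < m" "x = Suc i" by (rule atLeastAtMost_1E)
    then have "h x = h ((std_cycle m ^^ i) (Suc 0))" using m by (simp add: std_cycle_funpow)
    also have "\<dots> = (std_cycle m ^^ i) (h (Suc 0))"
      using funpow_intertwine_apply[OF hc[symmetric]] by simp
    also have "\<dots> = (std_cycle m ^^ j) x"
      using i j by (simp add: std_cycle_funpow add.commute)
    finally show ?thesis .
  qed (use h in \<open>simp add: std_cycle_funpow_outside permutes_not_in\<close>)
  then show "\<exists>j<m. h = std_cycle m ^^ j" using j by blast
next
  assume "\<exists>j<m. h = std_cycle m ^^ j"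
  then show "h \<circ> std_cycle m = std_cycle m \<circ> h"
    by (auto simp: funpow_swap1 fun_eq_iff)
qed

lemma is_mcycle_intertwine:
  assumes f: "f permutes {1..m}" and s: "is_mcycle m s" and ts: "t \<circ> f = f \<circ> s"
  shows "is_mcycle m t"
proof -
  have "t = f \<circ> s \<circ> inv f"
    using ts f by (metis comp_assoc comp_id permutes_inv_o(1))
  then have "t permutes {1..m}"
    using f s by (auto simp: is_mcycle_def intro!: permutes_compose permutes_inv)
  moreover have "\<exists>k. (t ^^ k) x = y" if "x \<in> {1..m}" "y \<in> {1..m}" for x y
  proof -
    have "inv f x \<in> {1..m}" "inv f y \<in> {1..m}"
      using that by (simp_all only: permutes_in_image[OF permutes_inv[OF f]])
    then obtain k where "(s ^^ k) (inv f x) = inv f y" using s unfolding is_mcycle_def by blast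
    then have "(t ^^ k) (f (inv f x)) = f (inv f y)" using funpow_intertwine_apply[OF ts] by simp
    then show ?thesis using permutes_inverses(1)[OF f] by auto
  qed
  ultimately show ?thesis by (simp add: is_mcycle_def)
qed

lemma mcycle_period_at_1:
  assumes m: "0 < m" and s: "is_mcycle m s"
  shows "(s ^^ m) 1 = 1" and "inj_on (\<lambda>k. (s ^^ k) 1) {0..<m}"
proof -
  have sp: "s permutes {1..m}" using s by (simp add: is_mcycle_def)
  then have perm: "permutation s" by (auto simp: permutation_permutes)
  have self: "1 \<in> Orbits.orbit s 1" by (rule permutation_self_in_orbit[OF perm])
  define n where "n = funpow_dist1 s 1 1"
  have "Orbits.orbit s 1 = {1..m}"
  proof
    show "Orbits.orbit s 1 \<subseteq> {1..m}"
      using permutes_in_funpow_image[OF sp, of 1] m by (auto simp: orbit_altdef_permutation[OF perm])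
    show "{1..m} \<subseteq> Orbits.orbit s 1"
      using s m by (force simp: is_mcycle_def orbit_altdef_permutation[OF perm])
  qed
  moreover have "Orbits.orbit s 1 = (\<lambda>k. (s ^^ k) 1) ` {0..<n}"
    unfolding n_def by (rule orbit_conv_funpow_dist1[OF self])
  moreover have inj: "inj_on (\<lambda>k. (s ^^ k) 1) {0..<n}"
    unfolding n_def by (rule inj_on_funpow_dist1[OF self])
  ultimately have "card {1..m} = card {0..<n}" using card_image by metis
  then have "n = m" by simp
  then show "(s ^^ m) 1 = 1" and "inj_on (\<lambda>k. (s ^^ k) 1) {0..<m}"
    using funpow_dist1_prop[OF self] inj unfolding n_def by simp_all
qed

lemma mcycle_conjugate_std_cycle:
  assumes m: "0 < m" and s: "is_mcycle m s"
  obtains f where "f permutes {1..m}" "s \<circ> f = f \<circ> std_cycle m"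
proof -
  have sp: "s permutes {1..m}" using s by (simp add: is_mcycle_def)
  note period = mcycle_period_at_1[OF m s]
  define f where "f i = (if i \<in> {1..m} then (s ^^ (i - 1)) 1 else i)" for i
  have "inj_on f {1..m}"
  proof (rule inj_onI)
    fix i j assume ij: "i \<in> {1..m}" "j \<in> {1..m}" "f i = f j"
    then have "(s ^^ (i - 1)) 1 = (s ^^ (j - 1)) 1" by (simp add: f_def)
    moreover have "i - 1 \<in> {0..<m}" "j - 1 \<in> {0..<m}" using ij by auto
    ultimately have "i - 1 = j - 1" by (rule inj_onD[OF period(2)])
    then show "i = j" using ij by auto
  qed
  moreover have "f ` {1..m} \<subseteq> {1..m}"
    using permutes_in_funpow_image[OF sp] m by (auto simp: f_def)
  ultimately have "f ` {1..m} = {1..m}" by (intro endo_inj_surj) auto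
  with \<open>inj_on f {1..m}\<close> have "f permutes {1..m}"
    by (intro bij_imp_permutes) (auto simp: bij_betw_def f_def)
  moreover have "s (f x) = f (std_cycle m x)" for x
  proof (cases "x \<in> {1..m}")
    case True
    then obtain i where i: "i < m" "x = Suc i" by (rule atLeastAtMost_1E)
    then have "s (f x) = (s ^^ Suc i) 1" by (simp add: f_def)
    also have "\<dots> = (s ^^ (Suc i mod m)) 1" using funpow_mod_eq[OF period(1)] by simp
    also have "\<dots> = f (std_cycle m x)"
      using i mod_less_divisor[of m "Suc i"] by (simp add: f_def std_cycle_def Suc_leI)
    finally show ?thesis .
  next
    case False
    then have "f x = x" "std_cycle m x = x" "s x = x"
      using sp by (auto simp: f_def std_cycle_def permutes_not_in)
    then show ?thesis by simp
  qed
  ultimately show ?thesis using that by (auto simp: fun_eq_iff)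
qed

section \<open>Counting m-cycles commuting with a power of the standard cycle\<close>

definition cycle_labellings :: "nat \<Rightarrow> (nat \<Rightarrow> nat) \<Rightarrow> (nat \<Rightarrow> nat) set" where
  "cycle_labellings m s = {f. f permutes {1..m} \<and> s \<circ> f = f \<circ> std_cycle m}"

lemma card_cycle_labellings:
  assumes m: "0 < m" and s: "is_mcycle m s"
  shows "card (cycle_labellings m s) = m"
proof -
  obtain f0 where f0: "f0 permutes {1..m}" "s \<circ> f0 = f0 \<circ> std_cycle m"
    using mcycle_conjugate_std_cycle[OF m s] by blast
  have "cycle_labellings m s = (\<lambda>j. f0 \<circ> std_cycle m ^^ j) ` {..<m}"
  proof (intro Set.set_eqI iffI)
    fix f assume "f \<in> cycle_labellings m s"
    then have f: "f permutes {1..m}" "s \<circ> f = f \<circ> std_cycle m" by (simp_all add: cycle_labellings_def)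
    define h where "h = inv f0 \<circ> f"
    have h: "h permutes {1..m}" using f f0 by (auto simp: h_def intro: permutes_compose permutes_inv)
    have "h \<circ> std_cycle m = inv f0 \<circ> s \<circ> f" using f by (simp add: h_def comp_assoc)
    also have "\<dots> = std_cycle m \<circ> h" by (simp add: h_def permutes_intertwine_inv[OF f0] comp_assoc)
    finally obtain j where "j < m" "h = std_cycle m ^^ j"
      using commutes_std_cycle_iff[OF m h] by blast
    moreover have "f = f0 \<circ> h"
      using permutes_inv_o(1)[OF f0(1)] by (simp add: h_def flip: comp_assoc)
    ultimately show "f \<in> (\<lambda>j. f0 \<circ> std_cycle m ^^ j) ` {..<m}" by blast
  next
    fix f assume "f \<in> (\<lambda>j. f0 \<circ> std_cycle m ^^ j) ` {..<m}"
    then obtain j where f: "f = f0 \<circ> std_cycle m ^^ j" by blast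
    have "s \<circ> f = f0 \<circ> (std_cycle m \<circ> std_cycle m ^^ j)"
      using f0(2) by (simp add: f flip: comp_assoc)
    also have "\<dots> = f \<circ> std_cycle m" by (simp add: f comp_assoc funpow_swap1[symmetric] fun_eq_iff)
    finally show "f \<in> cycle_labellings m s"
      using permutes_compose[OF std_cycle_funpow_permutes f0(1)] f by (auto simp: cycle_labellings_def)
  qed
  moreover have "inj_on (\<lambda>j. f0 \<circ> std_cycle m ^^ j) {..<m}"
    using m by (auto intro!: inj_onI simp: permutes_comp_cancel_left[OF f0(1)] std_cycle_funpow_eq_iff)
  ultimately show ?thesis by (simp add: card_image)
qed

definition std_cycle_conj :: "nat \<Rightarrow> (nat \<Rightarrow> nat) \<Rightarrow> nat \<Rightarrow> nat" where
  "std_cycle_conj m s = std_cycle m \<circ> s \<circ> std_cycle m ^^ (m - 1)"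

lemma std_cycle_conj_apply:
  "std_cycle_conj m s x = std_cycle m (s ((std_cycle m ^^ (m - 1)) x))"
  by (simp add: std_cycle_conj_def)

lemma std_cycle_conj_funpow_intertwine:
  assumes "0 < m"
  shows "(std_cycle_conj m ^^ k) s \<circ> std_cycle m ^^ k = std_cycle m ^^ k \<circ> s"
proof (induction k)
  case (Suc k)
  have undo: "(std_cycle m ^^ (m - 1)) (std_cycle m y) = y" for y
    using std_cycle_funpow_pred_comp(1)[OF assms] by (metis comp_apply id_apply)
  have "(std_cycle_conj m ^^ Suc k) s ((std_cycle m ^^ Suc k) x)
      = std_cycle m ((std_cycle_conj m ^^ k) s
          ((std_cycle m ^^ (m - 1)) (std_cycle m ((std_cycle m ^^ k) x))))" for x
    by (simp only: funpow.simps(2) comp_apply std_cycle_conj_apply[of m "(std_cycle_conj m ^^ k) s"])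
  also have "\<dots> x = (std_cycle m ^^ Suc k) (s x)" for x
    using fun_cong[OF Suc, of x] by (simp only: undo comp_apply funpow.simps(2))
  finally have "(std_cycle_conj m ^^ Suc k) s ((std_cycle m ^^ Suc k) x) = (std_cycle m ^^ Suc k) (s x)"
    for x .
  then show ?case by (simp add: fun_eq_iff)
qed simp

lemma std_cycle_conj_funpow_eq_self_iff:
  "0 < m \<Longrightarrow> (std_cycle_conj m ^^ k) s = s \<longleftrightarrow> s \<circ> std_cycle m ^^ k = std_cycle m ^^ k \<circ> s"
  using std_cycle_conj_funpow_intertwine[of m k s]
    permutes_comp_cancel_right[OF std_cycle_funpow_permutes, of _ k]
  by metis

lemma std_cycle_conj_funpow_period:
  assumes "0 < m" shows "(std_cycle_conj m ^^ m) s = s"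
proof -
  have "std_cycle m ^^ m = id" using assms by (simp add: std_cycle_funpow_eq_id_iff)
  then show ?thesis using assms by (simp add: std_cycle_conj_funpow_eq_self_iff)
qed

lemma std_cycle_conj_mcycles:
  assumes "0 < m" "s \<in> mcycles m" shows "std_cycle_conj m s \<in> mcycles m"
proof -
  have "std_cycle_conj m s \<circ> std_cycle m = std_cycle m \<circ> s"
    using std_cycle_conj_funpow_intertwine[OF assms(1), of 1 s] by simp
  then show ?thesis
    using is_mcycle_intertwine[OF std_cycle_permutes] assms(2) by (auto simp: mcycles_def)
qed

lemma finite_mcycles: "finite (mcycles m)"
  by (rule finite_subset[OF _ finite_permutations[of "{1..m}"]])
    (auto simp: mcycles_def is_mcycle_def)

definition conjugators :: "nat \<Rightarrow> nat \<Rightarrow> nat \<Rightarrow> (nat \<Rightarrow> nat) set" where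
  "conjugators m k j = {f. f permutes {1..m} \<and> std_cycle m ^^ k \<circ> f = f \<circ> std_cycle m ^^ j}"

lemma finite_conjugators: "finite (conjugators m k j)"
  by (rule finite_subset[OF _ finite_permutations[of "{1..m}"]]) (auto simp: conjugators_def)

lemma permutes_conj_eq_iff: "f permutes S \<Longrightarrow> inv f \<circ> a \<circ> f = inv f \<circ> b \<circ> f \<longleftrightarrow> a = b"
  by (simp add: permutes_comp_cancel_right permutes_comp_cancel_left[OF permutes_inv])

lemma commutes_std_cycle_funpow_iff:
  assumes m: "0 < m" and f: "f permutes {1..m}" and sf: "s \<circ> f = f \<circ> std_cycle m"
  shows "s \<circ> std_cycle m ^^ k = std_cycle m ^^ k \<circ> s
           \<longleftrightarrow> (\<exists>j<m. std_cycle m ^^ k \<circ> f = f \<circ> std_cycle m ^^ j)"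
proof -
  define h where "h = inv f \<circ> std_cycle m ^^ k \<circ> f"
  have h: "h permutes {1..m}"
    unfolding h_def by (intro permutes_compose permutes_inv f std_cycle_funpow_permutes)
  have fs: "inv f \<circ> s = std_cycle m \<circ> inv f" by (rule permutes_intertwine_inv[OF f sf])
  have "h \<circ> std_cycle m = inv f \<circ> (std_cycle m ^^ k \<circ> s) \<circ> f"
    by (simp only: h_def comp_assoc sf)
  moreover have "std_cycle m \<circ> h = inv f \<circ> (s \<circ> std_cycle m ^^ k) \<circ> f"
    by (simp only: h_def fs flip: comp_assoc)
  ultimately have "s \<circ> std_cycle m ^^ k = std_cycle m ^^ k \<circ> s \<longleftrightarrow> h \<circ> std_cycle m = std_cycle m \<circ> h"
    using permutes_conj_eq_iff[OF f] by metis
  also have "\<dots> \<longleftrightarrow> (\<exists>j<m. h = std_cycle m ^^ j)" by (rule commutes_std_cycle_iff[OF m h])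
  also have "\<dots> \<longleftrightarrow> (\<exists>j<m. std_cycle m ^^ k \<circ> f = f \<circ> std_cycle m ^^ j)"
  proof -
    have "f \<circ> h = std_cycle m ^^ k \<circ> f"
      using permutes_inv_o(1)[OF f] by (simp add: h_def flip: comp_assoc)
    then show ?thesis using permutes_comp_cancel_left[OF f, of h] by auto
  qed
  finally show ?thesis .
qed

lemma UN_cycle_labellings_commuting:
  assumes m: "0 < m"
  shows "(\<Union>s\<in>{s \<in> mcycles m. s \<circ> std_cycle m ^^ k = std_cycle m ^^ k \<circ> s}. cycle_labellings m s)
    = (\<Union>j<m. conjugators m k j)"
proof (intro Set.set_eqI iffI)
  fix f assume "f \<in> (\<Union>s\<in>{s \<in> mcycles m. s \<circ> std_cycle m ^^ k = std_cycle m ^^ k \<circ> s}. cycle_labellings m s)"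
  then obtain s where "s \<circ> std_cycle m ^^ k = std_cycle m ^^ k \<circ> s" "f permutes {1..m}"
    "s \<circ> f = f \<circ> std_cycle m"
    by (auto simp: cycle_labellings_def)
  then show "f \<in> (\<Union>j<m. conjugators m k j)"
    using commutes_std_cycle_funpow_iff[OF m] by (auto simp: conjugators_def)
next
  fix f assume "f \<in> (\<Union>j<m. conjugators m k j)"
  then have f: "f permutes {1..m}" and j: "\<exists>j<m. std_cycle m ^^ k \<circ> f = f \<circ> std_cycle m ^^ j"
    by (auto simp: conjugators_def)
  define s where "s = f \<circ> std_cycle m \<circ> inv f"
  have sf: "s \<circ> f = f \<circ> std_cycle m"
    using permutes_inv_o(2)[OF f] by (simp add: s_def comp_assoc)
  have "s \<in> mcycles m"
    using is_mcycle_intertwine[OF f is_mcycle_std_cycle[OF m] sf] by (simp add: mcycles_def)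
  moreover have "s \<circ> std_cycle m ^^ k = std_cycle m ^^ k \<circ> s"
    using commutes_std_cycle_funpow_iff[OF m f sf] j by simp
  ultimately show "f \<in> (\<Union>s\<in>{s \<in> mcycles m. s \<circ> std_cycle m ^^ k = std_cycle m ^^ k \<circ> s}.
      cycle_labellings m s)"
    using f sf by (auto simp: cycle_labellings_def)
qed

lemma card_commuting_mcycles:
  assumes m: "0 < m"
  shows "m * card {s \<in> mcycles m. s \<circ> std_cycle m ^^ k = std_cycle m ^^ k \<circ> s}
           = (\<Sum>j<m. card (conjugators m k j))"
proof -
  define F where "F = {s \<in> mcycles m. s \<circ> std_cycle m ^^ k = std_cycle m ^^ k \<circ> s}"
  have "card (\<Union>s\<in>F. cycle_labellings m s) = (\<Sum>s\<in>F. card (cycle_labellings m s))"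
  proof (rule card_UN_disjoint)
    show "finite F" using finite_mcycles by (simp add: F_def)
    show "\<forall>s\<in>F. finite (cycle_labellings m s)"
      by (auto simp: cycle_labellings_def intro: finite_subset[OF _ finite_permutations[of "{1..m}"]])
    have "s = t" if "f \<in> cycle_labellings m s" "f \<in> cycle_labellings m t" for s t f
      using that permutes_comp_cancel_right[of f "{1..m}" s t] by (simp add: cycle_labellings_def)
    then show "\<forall>s\<in>F. \<forall>t\<in>F. s \<noteq> t \<longrightarrow> cycle_labellings m s \<inter> cycle_labellings m t = {}" by blast
  qed
  moreover have "card (\<Union>j<m. conjugators m k j) = (\<Sum>j<m. card (conjugators m k j))"
  proof (rule card_UN_disjoint)
    show "\<forall>j\<in>{..<m}. finite (conjugators m k j)" by (simp add: finite_conjugators)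
    have "i = j" if "i < m" "j < m" "f \<in> conjugators m k i" "f \<in> conjugators m k j" for i j f
      using that m permutes_comp_cancel_left[of f "{1..m}" "std_cycle m ^^ i" "std_cycle m ^^ j"]
      by (auto simp: conjugators_def std_cycle_funpow_eq_iff)
    then show "\<forall>i\<in>{..<m}. \<forall>j\<in>{..<m}. i \<noteq> j \<longrightarrow> conjugators m k i \<inter> conjugators m k j = {}"
      by blast
  qed simp
  moreover have "card (cycle_labellings m s) = m" if "s \<in> F" for s
    using that card_cycle_labellings[OF m] by (simp add: F_def mcycles_def)
  ultimately show ?thesis using UN_cycle_labellings_commuting[OF m, of k] by (simp add: F_def)
qed

section \<open>Conjugators between powers of the standard cycle\<close>

lemma block_coordsE:
  assumes "x \<in> {1..g * d}" "0 < g"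
  obtains r s where "r < g" "s < d" "x = Suc (r + g * s)"
proof
  show "(x - 1) mod g < g" using assms(2) by simp
  show "(x - 1) div g < d" using assms by (auto simp: less_mult_imp_div_less mult.commute)
  show "x = Suc ((x - 1) mod g + g * ((x - 1) div g))" using assms(1) by simp
qed

lemma block_coords_in: "r < g \<Longrightarrow> s < d \<Longrightarrow> Suc (r + g * s) \<in> {1..g * d}"
proof -
  assume "r < g" "s < d"
  then have "r + g * s < g + g * s" by simp
  also have "\<dots> = g * Suc s" by simp
  also have "\<dots> \<le> g * d" using \<open>s < d\<close> by (intro mult_le_mono2) simp
  finally show ?thesis by (simp add: Suc_leI)
qed

lemma block_coords_eq_iff:
  fixes r g s r' s' :: nat
  assumes "r < g" "r' < g" shows "r + g * s = r' + g * s' \<longleftrightarrow> r = r' \<and> s = s'"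
proof
  assume eq: "r + g * s = r' + g * s'"
  have "r = (r + g * s) mod g" "s = (r + g * s) div g"
    "r' = (r' + g * s') mod g" "s' = (r' + g * s') div g"
    using assms by simp_all
  then show "r = r' \<and> s = s'" using eq by metis
qed simp

lemma mod_mult_block: "r < g \<Longrightarrow> (r + g * u) mod (g * d) = r + g * (u mod d)"
  for r g u d :: nat
  using mod_mult2_eq[of "r + g * u" g d] by simp

lemma std_cycle_funpow_block:
  assumes "r < g" "s < d"
  shows "(std_cycle (g * d) ^^ (g * t)) (Suc (r + g * s)) = Suc (r + g * ((s + t) mod d))"
proof -
  have "r + g * s < g * d" using block_coords_in[OF assms] by simp
  then show ?thesis
    using mod_mult_block[OF assms(1), of "s + t" d] by (simp add: std_cycle_funpow algebra_simps)
qed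

(* In coordinates x = 1 + r + g s with r < g and s < d this is (r, s) \<mapsto> (p r, (a r + v s) mod d);
   the cycles of c^g are the residue classes modulo g. *)
definition block_map :: "nat \<Rightarrow> nat \<Rightarrow> (nat \<Rightarrow> nat) \<Rightarrow> (nat \<Rightarrow> nat) \<Rightarrow> nat \<Rightarrow> nat \<Rightarrow> nat" where
  "block_map g d p a v x = (if x \<in> {1..g * d}
     then Suc (p ((x - 1) mod g) + g * ((a ((x - 1) mod g) + v * ((x - 1) div g)) mod d))
     else x)"

lemma block_map_block:
  "r < g \<Longrightarrow> s < d \<Longrightarrow> block_map g d p a v (Suc (r + g * s)) = Suc (p r + g * ((a r + v * s) mod d))"
  using block_coords_in[of r g s d] by (simp add: block_map_def)

lemma block_map_outside: "x \<notin> {1..g * d} \<Longrightarrow> block_map g d p a v x = x"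
  unfolding block_map_def by (rule if_not_P)

context
  fixes g d :: nat and p a :: "nat \<Rightarrow> nat"
  assumes g: "0 < g" and d: "0 < d" and p: "p permutes {..<g}"
begin

lemma block_map_permutes:
  assumes v: "coprime v d" shows "block_map g d p a v permutes {1..g * d}"
proof -
  have p_lt: "p r < g" if "r < g" for r using permutes_in_image[OF p] that by simp
  have in_range: "block_map g d p a v x \<in> {1..g * d}" if x: "x \<in> {1..g * d}" for x
  proof -
    obtain r s where "r < g" "s < d" "x = Suc (r + g * s)" using x g by (elim block_coordsE)
    then show ?thesis
      using block_coords_in[OF p_lt[OF \<open>r < g\<close>] mod_less_divisor[OF d]] by (simp add: block_map_block)
  qed
  have "inj_on (block_map g d p a v) {1..g * d}"
  proof (rule inj_onI)
    fix x y assume "x \<in> {1..g * d}" "y \<in> {1..g * d}" and eq: "block_map g d p a v x = block_map g d p a v y"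
    then obtain r s r' s' where rs: "r < g" "s < d" "x = Suc (r + g * s)" "r' < g" "s' < d" "y = Suc (r' + g * s')"
      using g by (metis block_coordsE)
    then have "p r = p r'" "(a r + v * s) mod d = (a r' + v * s') mod d"
      using eq p_lt d by (simp_all add: block_map_block block_coords_eq_iff)
    moreover from this(1) have "r = r'" by (rule injD[OF permutes_inj[OF p]])
    ultimately have "[a r + v * s = a r + v * s'] (mod d)" by (simp add: cong_def)
    then have "[v * s = v * s'] (mod d)" by (simp add: cong_add_lcancel_nat)
    then have "[s = s'] (mod d)" using v by (simp add: cong_mult_lcancel_nat)
    then have "s = s'" using rs by (simp add: cong_def)
    then show "x = y" using rs \<open>r = r'\<close> by simp
  qed
  moreover from this have "block_map g d p a v ` {1..g * d} = {1..g * d}"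
    using in_range by (intro endo_inj_surj) auto
  ultimately show ?thesis
    by (intro bij_imp_permutes) (auto simp: bij_betw_def block_map_outside)
qed

lemma block_map_intertwine:
  assumes vj: "[v * j = 1] (mod d)"
  shows "std_cycle (g * d) ^^ g \<circ> block_map g d p a v = block_map g d p a v \<circ> std_cycle (g * d) ^^ (g * j)"
proof
  fix x
  show "(std_cycle (g * d) ^^ g \<circ> block_map g d p a v) x = (block_map g d p a v \<circ> std_cycle (g * d) ^^ (g * j)) x"
  proof (cases "x \<in> {1..g * d}")
    case True
    then obtain r s where rs: "r < g" "s < d" "x = Suc (r + g * s)" using g by (elim block_coordsE)
    have pr: "p r < g" using permutes_in_image[OF p] rs by simp
    have "(a r + v * ((s + j) mod d)) mod d = (a r + v * (s + j)) mod d"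
      by (metis mod_add_right_eq mod_mult_right_eq)
    also have "\<dots> = (a r + v * s + v * j) mod d"
      by (simp add: distrib_left add.assoc)
    also have "\<dots> = (a r + v * s + (v * j) mod d) mod d"
      by (rule mod_add_right_eq[symmetric])
    also have "\<dots> = ((a r + v * s) mod d + 1) mod d"
      using vj by (simp add: cong_def mod_add_left_eq mod_add_right_eq mod_Suc_eq)
    finally have eq: "(a r + v * ((s + j) mod d)) mod d = ((a r + v * s) mod d + 1) mod d" .
    have "(std_cycle (g * d) ^^ g \<circ> block_map g d p a v) x
        = Suc (p r + g * (((a r + v * s) mod d + 1) mod d))"
      using rs std_cycle_funpow_block[OF pr, of "(a r + v * s) mod d" d 1] d
      by (simp add: block_map_block)
    also have "\<dots> = (block_map g d p a v \<circ> std_cycle (g * d) ^^ (g * j)) x"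
      using rs d by (simp add: block_map_block std_cycle_funpow_block eq)
    finally show ?thesis .
  next
    case False
    then show ?thesis by (simp add: block_map_outside std_cycle_funpow_outside)
  qed
qed

end

lemma inj_on_block_map_imp_inj_on:
  assumes d: "0 < d" and inj: "inj_on (block_map g d p a 1) {1..g * d}"
    and pa: "\<And>r. r < g \<Longrightarrow> p r < g \<and> a r < d"
  shows "inj_on p {..<g}"
proof (rule inj_onI)
  fix r r' assume r: "r \<in> {..<g}" and r': "r' \<in> {..<g}" and eq: "p r = p r'"
  define t where "t = (a r' + (d - a r)) mod d"
  have t: "t < d" using d by (simp add: t_def)
  have "(a r + t) mod d = (a r + (a r' + (d - a r))) mod d" by (simp add: t_def mod_add_right_eq)
  also have "\<dots> = a r'" using pa[of r] pa[of r'] r r' by simp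
  moreover have "r < g" "r' < g" using r r' by simp_all
  ultimately have "block_map g d p a 1 (Suc (r + g * t)) = block_map g d p a 1 (Suc (r' + g * 0))"
    using block_map_block[of r g t d p a 1] block_map_block[of r' g 0 d p a 1] t d eq pa[of r']
    by simp
  moreover have "Suc (r + g * t) \<in> {1..g * d}" "Suc (r' + g * 0) \<in> {1..g * d}"
    using block_coords_in[of r g t d] block_coords_in[of r' g 0 d] r r' t d by simp_all
  ultimately have "r + g * t = r' + g * 0" using inj_onD[OF inj] by blast
  then show "r = r'" using block_coords_eq_iff[of r g r' t 0] r r' by simp
qed

lemma centralizer_std_cycle_funpow_block_form:
  assumes g: "0 < g" and d: "0 < d" and h: "h \<in> conjugators (g * d) g g"
  obtains p a where "p permutes {..<g}" "a \<in> {..<g} \<rightarrow>\<^sub>E {..<d}" "h = block_map g d p a 1"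
proof -
  have hp: "h permutes {1..g * d}" and hc: "std_cycle (g * d) ^^ g \<circ> h = h \<circ> std_cycle (g * d) ^^ g"
    using h by (auto simp: conjugators_def)
  define p where "p r = (if r < g then (h (Suc r) - 1) mod g else r)" for r
  define a where "a = (\<lambda>r\<in>{..<g}. (h (Suc r) - 1) div g)"
  have start: "h (Suc r) = Suc (p r + g * a r) \<and> p r < g \<and> a r < d" if r: "r < g" for r
  proof -
    have "Suc r \<in> {1..g * d}" using block_coords_in[OF r d] by simp
    then have "h (Suc r) \<in> {1..g * d}" by (simp only: permutes_in_image[OF hp])
    then obtain r' s' where "r' < g" "s' < d" "h (Suc r) = Suc (r' + g * s')"
      using g by (elim block_coordsE)
    then show ?thesis using r by (simp add: p_def a_def)
  qed
  have h_block: "h (Suc (r + g * s)) = Suc (p r + g * ((a r + s) mod d))" if rs: "r < g" "s < d" for r s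
  proof -
    have "Suc (r + g * s) = (std_cycle (g * d) ^^ (g * s)) (Suc (r + g * 0))"
      using std_cycle_funpow_block[OF rs(1) d, of s] rs by simp
    then have "h (Suc (r + g * s)) = (std_cycle (g * d) ^^ (g * s)) (h (Suc r))"
      using funpow_intertwine_apply[OF hc, of s] by (simp add: funpow_mult)
    then show ?thesis
      using start[OF rs(1)] std_cycle_funpow_block[of "p r" g "a r" d s] by simp
  qed
  have h_eq: "h = block_map g d p a 1"
  proof
    fix x show "h x = block_map g d p a 1 x"
    proof (cases "x \<in> {1..g * d}")
      case True
      then obtain r s where "r < g" "s < d" "x = Suc (r + g * s)" using g by (elim block_coordsE)
      then show ?thesis by (simp add: h_block block_map_block)
    qed (use hp in \<open>simp add: block_map_outside permutes_not_in\<close>)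
  qed
  have "inj_on (block_map g d p a 1) {1..g * d}" using permutes_inj_on[OF hp] unfolding h_eq .
  then have "inj_on p {..<g}" by (rule inj_on_block_map_imp_inj_on[OF d]) (use start in blast)
  moreover have "p ` {..<g} \<subseteq> {..<g}" using start by blast
  ultimately have "bij_betw p {..<g} {..<g}" by (simp add: bij_betw_def endo_inj_surj)
  moreover have "p x = x" if "x \<notin> {..<g}" for x using that by (simp add: p_def)
  ultimately have "p permutes {..<g}" by (rule bij_imp_permutes)
  moreover have "a \<in> {..<g} \<rightarrow>\<^sub>E {..<d}"
  proof -
    have "a \<in> extensional {..<g}" unfolding a_def by (rule restrict_extensional)
    then show ?thesis using start by (simp add: PiE_iff)
  qed
  ultimately show ?thesis by (rule that[OF _ _ h_eq])
qed

lemma inj_on_block_map_centralizer: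
  assumes d: "0 < d"
  shows "inj_on (\<lambda>(p, a). block_map g d p a 1) ({p. p permutes {..<g}} \<times> ({..<g} \<rightarrow>\<^sub>E {..<d}))"
proof (rule inj_onI, clarify)
  fix p a p' a' assume p: "p permutes {..<g}" "a \<in> {..<g} \<rightarrow>\<^sub>E {..<d}"
    and p': "p' permutes {..<g}" "a' \<in> {..<g} \<rightarrow>\<^sub>E {..<d}"
    and eq: "block_map g d p a 1 = block_map g d p' a' 1"
  have "p r = p' r \<and> a r = a' r" for r
  proof (cases "r < g")
    case True
    then have lt: "p r < g" "p' r < g" "a r < d" "a' r < d"
      using permutes_in_image[OF p(1)] permutes_in_image[OF p'(1)] p(2) p'(2)
      by (auto simp: PiE_iff)
    have "block_map g d p a 1 (Suc (r + g * 0)) = Suc (p r + g * a r)"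
      using block_map_block[OF True d, of p a 1] lt(3) by (simp only: mult_0_right add_0_right mod_less)
    moreover have "block_map g d p' a' 1 (Suc (r + g * 0)) = Suc (p' r + g * a' r)"
      using block_map_block[OF True d, of p' a' 1] lt(4) by (simp only: mult_0_right add_0_right mod_less)
    ultimately have "p r + g * a r = p' r + g * a' r" unfolding eq by (simp only: Suc_inject)
    then show ?thesis by (simp only: block_coords_eq_iff[OF lt(1,2)])
  next
    case False
    then have "r \<notin> {..<g}" by simp
    then show ?thesis
      using permutes_not_in[OF p(1)] permutes_not_in[OF p'(1)] PiE_arb[OF p(2)] PiE_arb[OF p'(2)]
      by simp
  qed
  then show "p = p' \<and> a = a'" by (simp add: fun_eq_iff)
qed

lemma card_centralizer_std_cycle_funpow_block:
  assumes g: "0 < g" and d: "0 < d"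
  shows "card (conjugators (g * d) g g) = fact g * d ^ g"
proof -
  let ?D = "{p. p permutes {..<g}} \<times> ({..<g} \<rightarrow>\<^sub>E {..<d})"
  let ?F = "\<lambda>(p, a). block_map g d p a 1"
  have "conjugators (g * d) g g \<subseteq> ?F ` ?D"
  proof
    fix h assume "h \<in> conjugators (g * d) g g"
    then obtain p a where "p permutes {..<g}" "a \<in> {..<g} \<rightarrow>\<^sub>E {..<d}" "h = block_map g d p a 1"
      by (rule centralizer_std_cycle_funpow_block_form[OF g d])
    then show "h \<in> ?F ` ?D" by (intro image_eqI[of _ _ "(p, a)"]) auto
  qed
  moreover have "?F ` ?D \<subseteq> conjugators (g * d) g g"
  proof clarify
    fix p a assume "p permutes {..<g}"
    then show "block_map g d p a 1 \<in> conjugators (g * d) g g"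
      using block_map_permutes[OF g d, of p 1 a] block_map_intertwine[OF g d, of p 1 1 a]
      by (simp add: conjugators_def)
  qed
  moreover have "inj_on ?F ?D" by (rule inj_on_block_map_centralizer[OF d])
  ultimately have "card (conjugators (g * d) g g) = card ?D"
    by (metis card_image subset_antisym)
  also have "\<dots> = fact g * d ^ g"
    by (simp add: card_cartesian_product card_permutations card_PiE)
  finally show ?thesis .
qed

lemma gcd_eq_if_dvd_mult_iff:
  fixes k j m :: nat
  assumes m: "0 < m" and iff: "\<And>n. m dvd k * n \<longleftrightarrow> m dvd j * n"
  shows "gcd k m = gcd j m"
proof -
  have "gcd a m dvd b" if "m dvd a * (m div gcd a m) \<Longrightarrow> m dvd b * (m div gcd a m)" for a b :: nat
  proof -
    define q where "q = m div gcd a m"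
    have mq: "m = gcd a m * q" by (simp add: q_def)
    then have "q \<noteq> 0" using m by (cases "q = 0") auto
    have "a * q = (a div gcd a m) * m" by (simp add: q_def dvd_div_mult div_mult_swap mult.commute)
    then have "gcd a m * q dvd b * q" using that mq by (simp add: q_def)
    then show ?thesis using \<open>q \<noteq> 0\<close> by simp
  qed
  then have "gcd k m dvd j" "gcd j m dvd k" using iff by blast+
  then show ?thesis by (simp add: dvd_antisym)
qed

(* Conjugate powers of c have the same order m / gcd(k, m). *)
lemma conjugators_gcd_eq:
  assumes m: "0 < m" and f: "f \<in> conjugators m k j" shows "gcd k m = gcd j m"
proof (rule gcd_eq_if_dvd_mult_iff[OF m])
  fix n
  have fp: "f permutes {1..m}" using f by (simp add: conjugators_def)
  have "std_cycle m ^^ (k * n) \<circ> f = f \<circ> std_cycle m ^^ (j * n)"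
    using funpow_intertwine[of "std_cycle m ^^ k" f "std_cycle m ^^ j" n] f
    by (simp add: conjugators_def funpow_mult)
  then have "std_cycle m ^^ (k * n) = id \<longleftrightarrow> std_cycle m ^^ (j * n) = id"
    using permutes_comp_cancel_left[OF fp, of id] permutes_comp_cancel_right[OF fp, of _ id] by auto
  then show "m dvd k * n \<longleftrightarrow> m dvd j * n" using m by (simp add: std_cycle_funpow_eq_id_iff)
qed

lemma conjugators_gcd_nonempty:
  assumes m: "0 < m" shows "conjugators m (gcd j m) j \<noteq> {}"
proof -
  define g d j' where "g = gcd j m" and "d = m div g" and "j' = j div g"
  have g: "0 < g" and md: "m = g * d" and jj: "j = g * j'"
    using m by (simp_all add: g_def d_def j'_def)
  then have d: "0 < d" using m by auto
  have "coprime j' d" unfolding j'_def d_def g_def by (rule div_gcd_coprime) (use m in simp)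
  then obtain v where v: "[j' * v = 1] (mod d)" using cong_solve_coprime_nat by auto
  then have "coprime v d" using coprime_iff_invertible_nat[of v d] by (auto simp: mult.commute)
  moreover have "[v * j' = 1] (mod d)" using v by (simp only: mult.commute)
  ultimately have "block_map g d id (\<lambda>_. 0) v \<in> conjugators (g * d) g (g * j')"
    unfolding conjugators_def
    using block_map_permutes[OF g d permutes_id] block_map_intertwine[OF g d permutes_id] by blast
  then have "block_map g d id (\<lambda>_. 0) v \<in> conjugators m g j" by (simp only: md jj)
  then show ?thesis by (auto simp: g_def)
qed

lemma card_conjugators_eq_card_centralizer:
  assumes f0: "f0 \<in> conjugators m k j"
  shows "card (conjugators m k j) = card (conjugators m j j)"
proof -
  have f0p: "f0 permutes {1..m}" and f0c: "std_cycle m ^^ k \<circ> f0 = f0 \<circ> std_cycle m ^^ j"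
    using f0 by (auto simp: conjugators_def)
  have inv_c: "inv f0 \<circ> std_cycle m ^^ k = std_cycle m ^^ j \<circ> inv f0"
    by (rule permutes_intertwine_inv[OF f0p f0c])
  have "std_cycle m ^^ k \<circ> (f0 \<circ> h) = f0 \<circ> h \<circ> std_cycle m ^^ j"
    if "std_cycle m ^^ j \<circ> h = h \<circ> std_cycle m ^^ j" for h
  proof -
    have "std_cycle m ^^ k \<circ> (f0 \<circ> h) = f0 \<circ> (std_cycle m ^^ j \<circ> h)"
      using f0c by (simp flip: comp_assoc)
    also have "\<dots> = f0 \<circ> h \<circ> std_cycle m ^^ j" using that by (simp add: comp_assoc)
    finally show ?thesis .
  qed
  moreover have "std_cycle m ^^ j \<circ> (inv f0 \<circ> f) = inv f0 \<circ> f \<circ> std_cycle m ^^ j"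
    if "std_cycle m ^^ k \<circ> f = f \<circ> std_cycle m ^^ j" for f
  proof -
    have "std_cycle m ^^ j \<circ> (inv f0 \<circ> f) = inv f0 \<circ> (std_cycle m ^^ k \<circ> f)"
      using inv_c by (simp flip: comp_assoc)
    also have "\<dots> = inv f0 \<circ> f \<circ> std_cycle m ^^ j" using that by (simp add: comp_assoc)
    finally show ?thesis .
  qed
  ultimately have "bij_betw (\<lambda>h. f0 \<circ> h) (conjugators m j j) (conjugators m k j)"
    using f0p permutes_inv[OF f0p] permutes_inv_o[OF f0p]
    by (intro bij_betw_byWitness[where f' = "\<lambda>f. inv f0 \<circ> f"])
      (auto simp: conjugators_def permutes_compose simp flip: comp_assoc)
  then show ?thesis by (rule bij_betw_same_card[symmetric])
qed

lemma conjugators_centralizer_gcd: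
  assumes m: "0 < m" shows "conjugators m j j = conjugators m (gcd j m) (gcd j m)"
proof -
  obtain x where x: "std_cycle m ^^ gcd j m = (std_cycle m ^^ j) ^^ x"
  proof (cases "j = 0")
    case True
    then show ?thesis using that[of 1] m by (simp add: std_cycle_funpow_eq_id_iff)
  next
    case False
    then obtain x y where "j * x = m * y + gcd j m" using bezout_nat by blast
    then have "(j * x) mod m = gcd j m mod m" by simp
    then show ?thesis using that[of x] m by (simp add: funpow_mult std_cycle_funpow_eq_iff)
  qed
  moreover have "std_cycle m ^^ j = (std_cycle m ^^ gcd j m) ^^ (j div gcd j m)"
    by (simp add: funpow_mult)
  ultimately have "std_cycle m ^^ j \<circ> f = f \<circ> std_cycle m ^^ j
      \<longleftrightarrow> std_cycle m ^^ gcd j m \<circ> f = f \<circ> std_cycle m ^^ gcd j m" for f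
    using funpow_intertwine[of "std_cycle m ^^ j" f "std_cycle m ^^ j" x]
      funpow_intertwine[of "std_cycle m ^^ gcd j m" f "std_cycle m ^^ gcd j m" "j div gcd j m"]
    by (intro iffI) simp_all
  then show ?thesis by (simp add: conjugators_def)
qed

lemma card_conjugators:
  assumes m: "0 < m"
  shows "card (conjugators m k j)
    = (if gcd k m = gcd j m then fact (gcd j m) * (m div gcd j m) ^ gcd j m else 0)"
proof (cases "gcd k m = gcd j m")
  case True
  define g where "g = gcd j m"
  obtain f1 f2 where f1: "f1 \<in> conjugators m g j" and f2: "f2 \<in> conjugators m g k"
    using conjugators_gcd_nonempty[OF m, of j] conjugators_gcd_nonempty[OF m, of k] True
    by (auto simp: g_def)
  have f2p: "f2 permutes {1..m}" "std_cycle m ^^ g \<circ> f2 = f2 \<circ> std_cycle m ^^ k"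
    using f2 by (auto simp: conjugators_def)
  have "std_cycle m ^^ k \<circ> (inv f2 \<circ> f1) = inv f2 \<circ> (std_cycle m ^^ g \<circ> f1)"
    using permutes_intertwine_inv[OF f2p] by (simp flip: comp_assoc)
  then have "inv f2 \<circ> f1 \<in> conjugators m k j"
    using f1 f2p(1) by (auto simp: conjugators_def comp_assoc intro: permutes_compose permutes_inv)
  then have "card (conjugators m k j) = card (conjugators m g g)"
    using card_conjugators_eq_card_centralizer conjugators_centralizer_gcd[OF m] by (simp add: g_def)
  also have "\<dots> = fact g * (m div g) ^ g"
    using card_centralizer_std_cycle_funpow_block[of g "m div g"] m
    by (simp add: g_def div_greater_zero_iff gcd_le2_nat)
  finally show ?thesis using True by (simp add: g_def)
next
  case False
  then show ?thesis using conjugators_gcd_eq[OF m] by (auto simp: card_eq_0_iff)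
qed

section \<open>Summation over divisors\<close>

lemma sum_gcd_eq_sum_divisors:
  fixes h :: "nat \<Rightarrow> 'a :: comm_semiring_1"
  assumes m: "0 < m"
  shows "(\<Sum>k<m. h (gcd k m)) = (\<Sum>g | g dvd m. of_nat (totient (m div g)) * h g)"
proof -
  have "(\<Sum>k<m. h (gcd k m)) = (\<Sum>k\<in>{0<..m}. h (gcd k m))"
    using m by (intro sum.reindex_bij_witness[of _ "\<lambda>k. k mod m" "\<lambda>k. if k = 0 then m else k"])
      (auto simp: le_less)
  also have "\<dots> = (\<Sum>g\<in>(\<lambda>k. gcd k m) ` {0<..m}. \<Sum>k\<in>{k \<in> {0<..m}. gcd k m = g}. h (gcd k m))"
    by (rule sum.image_gen) simp
  also have "(\<lambda>k. gcd k m) ` {0<..m} = {g. g dvd m}"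
  proof
    show "{g. g dvd m} \<subseteq> (\<lambda>k. gcd k m) ` {0<..m}"
    proof
      fix g assume "g \<in> {g. g dvd m}"
      then have "g \<in> {0<..m}" "gcd g m = g"
        using m by (auto simp: dvd_imp_le gcd_nat.absorb1 intro: Nat.gr0I)
      then show "g \<in> (\<lambda>k. gcd k m) ` {0<..m}" by (metis image_eqI)
    qed
  qed auto
  also have "(\<Sum>g | g dvd m. \<Sum>k\<in>{k \<in> {0<..m}. gcd k m = g}. h (gcd k m))
      = (\<Sum>g | g dvd m. of_nat (totient (m div g)) * h g)"
  proof (rule sum.cong[OF refl])
    fix g assume "g \<in> {g. g dvd m}"
    then have "(\<Sum>k\<in>{k \<in> {0<..m}. gcd k m = g}. h (gcd k m)) = (\<Sum>k\<in>{k \<in> {0<..m}. gcd k m = g}. h g)"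
      by simp
    also have "\<dots> = of_nat (totient (m div g)) * h g"
      using \<open>g \<in> {g. g dvd m}\<close> by (simp only: sum_constant card_gcd_eq_totient[OF m] mem_Collect_eq)
    finally show "(\<Sum>k\<in>{k \<in> {0<..m}. gcd k m = g}. h (gcd k m)) = of_nat (totient (m div g)) * h g" .
  qed
  finally show ?thesis .
qed

lemma div_div_eq_self_nat: "d dvd m \<Longrightarrow> 0 < m \<Longrightarrow> m div (m div d) = d"
  for d m :: nat
  by (auto elim!: dvdE)

lemma sum_card_conjugators:
  assumes m: "0 < m"
  shows "(\<Sum>k<m. \<Sum>j<m. real (card (conjugators m k j)))
    = (\<Sum>d | d dvd m. real (totient d) ^ 2 * fact (m div d) * real d ^ (m div d))"
proof -
  define F where "F g = real (fact g * (m div g) ^ g)" for g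
  have inner: "(\<Sum>j<m. real (card (conjugators m k j))) = real (totient (m div gcd k m)) * F (gcd k m)"
    for k
  proof -
    have "(\<Sum>j<m. real (card (conjugators m k j))) = (\<Sum>j<m. if gcd k m = gcd j m then F (gcd j m) else 0)"
      using m by (intro sum.cong refl) (simp add: card_conjugators F_def)
    also have "\<dots> = (\<Sum>g | g dvd m. real (totient (m div g)) * (if gcd k m = g then F g else 0))"
      by (rule sum_gcd_eq_sum_divisors[OF m])
    also have "\<dots> = real (totient (m div gcd k m)) * F (gcd k m)"
      using m by (simp add: if_distrib[of "\<lambda>x. _ * x"] sum.delta finite_divisors_nat cong: if_cong)
    finally show ?thesis .
  qed
  have "(\<Sum>k<m. \<Sum>j<m. real (card (conjugators m k j)))
      = (\<Sum>g | g dvd m. real (totient (m div g)) * (real (totient (m div g)) * F g))"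
    unfolding inner by (rule sum_gcd_eq_sum_divisors[OF m])
  also have "\<dots> = (\<Sum>d | d dvd m. real (totient d) ^ 2 * fact (m div d) * real d ^ (m div d))"
  proof (rule sum.reindex_bij_witness[of _ "\<lambda>d. m div d" "\<lambda>g. m div g"])
    have co: "m div d dvd m" "m div (m div d) = d" if "d \<in> {d. d dvd m}" for d
      using that m by (auto simp: div_div_eq_self_nat elim!: dvdE)
    show "m div (m div g) = g" "m div g \<in> {d. d dvd m}" if "g \<in> {g. g dvd m}" for g
      using co[OF that] by simp_all
    show "m div (m div d) = d" "m div d \<in> {g. g dvd m}" if "d \<in> {d. d dvd m}" for d
      using co[OF that] by simp_all
    show "real (totient (m div g)) ^ 2 * fact (m div (m div g)) * real (m div g) ^ (m div (m div g))
        = real (totient (m div g)) * (real (totient (m div g)) * F g)" if "g \<in> {g. g dvd m}" for g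
      using co[OF that] by (simp add: F_def power2_eq_square)
  qed
  finally show ?thesis .
qed

section \<open>Generalized Vassiliev elements\<close>

lemma ins_shift_neq_Suc: "ins_shift t i \<noteq> Suc t"
  by (simp add: ins_shift_def)

lemma ins_shift_eq_iff: "ins_shift t i = ins_shift t j \<longleftrightarrow> i = j"
  by (auto simp: ins_shift_def)

lemma ins_shift_old_label: "y \<noteq> Suc t \<Longrightarrow> ins_shift t (if y \<le> t then y else y - 1) = y"
  by (auto simp: ins_shift_def)

lemma valpha_ins_shift:
  "valpha \<gamma> q t (ins_shift t i) = (if q = Some i then Suc t else ins_shift t (\<gamma> i))"
proof -
  have "(if ins_shift t i \<le> t then ins_shift t i else ins_shift t i - 1) = i"
    by (auto simp: ins_shift_def)
  then show ?thesis by (simp add: valpha_def ins_shift_neq_Suc)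
qed

lemma valpha_new_point:
  "valpha \<gamma> (Some q) t (Suc t) = ins_shift t (\<gamma> q)" "valpha \<gamma> None t (Suc t) = Suc t"
  by (simp_all add: valpha_def)

lemma valpha_None_not_mcycle:
  assumes "2 \<le> m" "t < m" shows "valpha \<gamma> None t \<notin> mcycles m"
proof
  assume "valpha \<gamma> None t \<in> mcycles m"
  moreover have "Suc t \<in> {1..m}" "(if t = 0 then 2 else 1) \<in> {1..m}" using assms by auto
  ultimately obtain k where "(valpha \<gamma> None t ^^ k) (Suc t) = (if t = 0 then 2 else 1)"
    unfolding mcycles_def is_mcycle_def by blast
  moreover have "(valpha \<gamma> None t ^^ k) (Suc t) = Suc t"
    by (induction k) (simp_all add: valpha_new_point)
  ultimately show False by (simp split: if_splits)
qed

lemma funpow_semiconj: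
  assumes "\<And>z. \<pi> (f z) = \<pi> z \<or> \<pi> (f z) = g (\<pi> z)"
  shows "\<exists>k. (g ^^ k) (\<pi> z) = \<pi> ((f ^^ n) z)"
proof (induction n)
  case (Suc n)
  then obtain k where "(g ^^ k) (\<pi> z) = \<pi> ((f ^^ n) z)" by blast
  then show ?case using assms[of "(f ^^ n) z"] by (metis funpow.simps(2) comp_apply)
qed (auto intro: exI[of _ 0])

lemma transitive_if_valpha_mcycle:
  assumes "valpha \<gamma> (Some q) t \<in> mcycles m" "t < m" "i \<in> {1..m - 1}" "i' \<in> {1..m - 1}"
  shows "\<exists>k. (\<gamma> ^^ k) i = i'"
proof -
  \<comment> \<open>old forgets the inserted point; it semi-conjugates \<alpha>_t to \<gamma>\<close>
  define old where "old z = (if z = Suc t then \<gamma> q else if z \<le> t then z else z - 1)" for z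
  have old_ins: "old (ins_shift t j) = j" for j
    by (auto simp: old_def ins_shift_def)
  have old_new: "old (Suc t) = \<gamma> q" by (simp add: old_def)
  have step: "old (valpha \<gamma> (Some q) t z) = old z \<or> old (valpha \<gamma> (Some q) t z) = \<gamma> (old z)" for z
  proof (cases "z = Suc t")
    case False
    then have "ins_shift t (old z) = z" by (simp add: old_def ins_shift_old_label)
    then have "valpha \<gamma> (Some q) t z = (if q = old z then Suc t else ins_shift t (\<gamma> (old z)))"
      using valpha_ins_shift[of \<gamma> "Some q" t "old z"] by simp
    then show ?thesis by (simp add: old_ins old_new)
  qed (simp add: valpha_new_point old_ins old_new)
  have "ins_shift t i \<in> {1..m}" "ins_shift t i' \<in> {1..m}"
    using assms(2-4) by (auto simp: ins_shift_def)
  then obtain n where "(valpha \<gamma> (Some q) t ^^ n) (ins_shift t i) = ins_shift t i'"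
    using assms(1) unfolding mcycles_def is_mcycle_def by blast
  moreover obtain k where "(\<gamma> ^^ k) (old (ins_shift t i)) = old ((valpha \<gamma> (Some q) t ^^ n) (ins_shift t i))"
    using funpow_semiconj[of old, OF step] by blast
  ultimately show ?thesis by (auto simp: old_ins)
qed

(* Moves the point m into the gap after t, so that \<alpha>_t is a relabelling of \<alpha>_(m-1). *)
definition insertion_perm :: "nat \<Rightarrow> nat \<Rightarrow> nat \<Rightarrow> nat" where
  "insertion_perm m t y = (if y = m then Suc t else if y < m then ins_shift t y else y)"

lemma insertion_perm_permutes:
  assumes "t < m" shows "insertion_perm m t permutes {1..m}"
proof -
  have "inj_on (insertion_perm m t) {1..m}"
    by (rule inj_onI) (auto simp: insertion_perm_def ins_shift_eq_iff ins_shift_neq_Suc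
        ins_shift_neq_Suc[symmetric] split: if_splits)
  moreover have "insertion_perm m t ` {1..m} \<subseteq> {1..m}"
    using assms by (auto simp: insertion_perm_def ins_shift_def)
  ultimately have "bij_betw (insertion_perm m t) {1..m} {1..m}" by (simp add: bij_betw_def endo_inj_surj)
  moreover have "insertion_perm m t x = x" if "x \<notin> {1..m}" for x
    using that assms by (auto simp: insertion_perm_def ins_shift_def)
  ultimately show ?thesis by (rule bij_imp_permutes)
qed

lemma insertion_perm_0: "0 < m \<Longrightarrow> insertion_perm m 0 = std_cycle m"
  by (auto simp: insertion_perm_def std_cycle_def ins_shift_def fun_eq_iff)

lemma valpha_intertwine_insertion_perm:
  assumes \<gamma>: "\<gamma> permutes {1..m - 1}" and q: "q \<in> {1..m - 1}" and t: "t < m"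
  shows "valpha \<gamma> (Some q) t \<circ> insertion_perm m t = insertion_perm m t \<circ> valpha \<gamma> (Some q) (m - 1)"
proof
  fix y
  obtain n where mn: "m = Suc n" using t by (cases m) auto
  have \<gamma>_lt: "\<gamma> i < m" if "i < m" for i
    using that permutes_in_image[OF \<gamma>, of i] permutes_not_in[OF \<gamma>, of i] by (cases "i = 0") auto
  have q_lt: "q < m" using q mn by auto
  show "(valpha \<gamma> (Some q) t \<circ> insertion_perm m t) y = (insertion_perm m t \<circ> valpha \<gamma> (Some q) (m - 1)) y"
  proof (cases "y < m")
    case True
    then have "valpha \<gamma> (Some q) n y = (if q = y then m else \<gamma> y)"
      using valpha_ins_shift[of \<gamma> "Some q" n y] \<gamma>_lt[OF True] mn by (simp add: ins_shift_def)
    then show ?thesis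
      using True \<gamma>_lt[OF True] mn by (simp add: insertion_perm_def valpha_ins_shift)
  next
    case ge: False
    show ?thesis
    proof (cases "y = m")
      case True
      then have "valpha \<gamma> (Some q) n y = \<gamma> q"
        using valpha_new_point(1)[of \<gamma> q n] \<gamma>_lt[OF q_lt] mn by (simp add: ins_shift_def)
      then show ?thesis
        using True \<gamma>_lt[OF q_lt] mn by (simp add: insertion_perm_def valpha_new_point)
    next
      case False
      then have "y - 1 \<notin> {1..m - 1}" "q \<noteq> y - 1" using ge q by auto
      then have "valpha \<gamma> (Some q) s (ins_shift s (y - 1)) = ins_shift s (y - 1)" for s
        by (simp add: valpha_ins_shift permutes_not_in[OF \<gamma>])
      moreover have "ins_shift (m - 1) (y - 1) = y" "ins_shift t (y - 1) = y"
        using ge False t by (auto simp: ins_shift_def)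
      ultimately show ?thesis using ge False by (metis comp_apply insertion_perm_def)
    qed
  qed
qed

lemma valpha_0_eq_std_cycle_conj:
  assumes "\<gamma> permutes {1..m - 1}" "q \<in> {1..m - 1}" "0 < m"
  shows "valpha \<gamma> (Some q) 0 = std_cycle_conj m (valpha \<gamma> (Some q) (m - 1))"
proof -
  have "valpha \<gamma> (Some q) 0 \<circ> std_cycle m = std_cycle m \<circ> valpha \<gamma> (Some q) (m - 1)"
    using valpha_intertwine_insertion_perm[OF assms(1,2,3)] insertion_perm_0[OF assms(3)] by simp
  then have "valpha \<gamma> (Some q) 0 \<circ> (std_cycle m \<circ> std_cycle m ^^ (m - 1))
      = std_cycle m \<circ> valpha \<gamma> (Some q) (m - 1) \<circ> std_cycle m ^^ (m - 1)"
    by (simp flip: comp_assoc)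
  then show ?thesis
    using std_cycle_funpow_pred_comp(2)[OF assms(3)] by (simp add: std_cycle_conj_def)
qed

lemma sum_atLeastAtMost_1_telescope:
  fixes f :: "nat \<Rightarrow> 'a :: ab_group_add"
  shows "(\<Sum>j\<in>{1..n}. f (j - 1) - f j) = f 0 - f n"
  using sum_telescope''[of 0 n "\<lambda>k. - f k"] by (simp add: algebra_simps)

lemma vass_elt_full_cycle:
  assumes "\<gamma> permutes {1..m - 1}" "q \<in> {1..m - 1}" "0 < m"
  shows "vass_elt \<gamma> (Some q) {1..m - 1}
    = gvec (std_cycle_conj m (valpha \<gamma> (Some q) (m - 1))) - gvec (valpha \<gamma> (Some q) (m - 1))"
  unfolding vass_elt_def sum_atLeastAtMost_1_telescope[of "\<lambda>t. gvec (valpha \<gamma> (Some q) t)"]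
    valpha_0_eq_std_cycle_conj[OF assms] ..

lemma perm_cycles_transitive:
  assumes \<gamma>: "\<gamma> permutes {1..n}" and tr: "\<And>i i'. i \<in> {1..n} \<Longrightarrow> i' \<in> {1..n} \<Longrightarrow> \<exists>k. (\<gamma> ^^ k) i = i'"
    and j: "j \<in> {1..n}"
  shows "{(\<gamma> ^^ k) j | k. True} = {1..n}"
proof
  show "{(\<gamma> ^^ k) j | k. True} \<subseteq> {1..n}" using permutes_in_funpow_image[OF \<gamma> j] by auto
  show "{1..n} \<subseteq> {(\<gamma> ^^ k) j | k. True}"
  proof
    fix x assume "x \<in> {1..n}"
    then obtain k where "(\<gamma> ^^ k) j = x" using tr[OF j] by blast
    then show "x \<in> {(\<gamma> ^^ k) j | k. True}" by blast
  qed
qed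

lemma vass_cyc_elt_is_std_cycle_conj_diff:
  assumes m: "2 \<le> m" and E: "E \<in> vass_cyc_elts m"
  obtains s where "s \<in> mcycles m" "E = gvec (std_cycle_conj m s) - gvec s"
proof -
  obtain \<gamma> q v where E: "E = vass_elt \<gamma> q v" and \<gamma>: "\<gamma> permutes {1..m - 1}"
    and q: "q = None \<or> (\<exists>i\<in>{1..m - 1}. q = Some i)" and v: "v \<in> perm_cycles (m - 1) \<gamma>"
    and terms: "\<forall>j\<in>v. valpha \<gamma> q (j - 1) \<in> mcycles m \<and> valpha \<gamma> q j \<in> mcycles m"
    using E unfolding vass_cyc_elts_def by blast
  obtain j0 where j0: "j0 \<in> {1..m - 1}" and vj: "v = {(\<gamma> ^^ k) j0 | k. True}"
    using v unfolding perm_cycles_def by blast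
  have "j0 \<in> v" unfolding vj by (auto intro: exI[of _ 0])
  then have j0_mcycle: "valpha \<gamma> q j0 \<in> mcycles m" using terms by blast
  then obtain q' where q': "q' \<in> {1..m - 1}" "q = Some q'"
    using q valpha_None_not_mcycle[OF m, of j0] j0 by fastforce
  have "v = {1..m - 1}"
    unfolding vj using j0_mcycle j0 q'
    by (intro perm_cycles_transitive[OF \<gamma> _ j0] transitive_if_valpha_mcycle) auto
  then have "valpha \<gamma> q (m - 1) \<in> mcycles m" using terms m by auto
  moreover have "E = gvec (std_cycle_conj m (valpha \<gamma> q (m - 1))) - gvec (valpha \<gamma> q (m - 1))"
    unfolding E \<open>v = {1..m - 1}\<close> q'(2) using \<gamma> q'(1) m by (intro vass_elt_full_cycle) auto
  ultimately show ?thesis using that by blast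
qed

lemma mcycle_moves_last:
  assumes m: "2 \<le> m" and s: "is_mcycle m s" shows "s m \<noteq> m"
proof
  assume "s m = m"
  then have "(s ^^ k) m = m" for k by (induction k) simp_all
  moreover obtain k where "(s ^^ k) m = 1" using s m unfolding is_mcycle_def by fastforce
  ultimately show False using m by simp
qed

lemma transpose_last_comp_permutes:
  fixes s :: "nat \<Rightarrow> nat"
  assumes sp: "s permutes {1..m}" and m: "0 < m"
  shows "Transposition.transpose m (s m) \<circ> s permutes {1..m - 1}"
proof (rule permutes_superset)
  have "m \<in> {1..m}" using m by simp
  moreover from this have "s m \<in> {1..m}" by (simp only: permutes_in_image[OF sp])
  ultimately show "Transposition.transpose m (s m) \<circ> s permutes {1..m}"
    by (intro permutes_compose sp permutes_swap_id)
  fix x assume "x \<in> {1..m} - {1..m - 1}"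
  then have "x = m" by auto
  then show "(Transposition.transpose m (s m) \<circ> s) x = x" by simp
qed

lemma valpha_transpose_last:
  assumes sp: "s permutes {1..m}" and sm_ne: "s m \<noteq> m" and m: "0 < m"
  defines "\<gamma> \<equiv> Transposition.transpose m (s m) \<circ> s" and "q \<equiv> inv s m"
  shows "valpha \<gamma> (Some q) (m - 1) = s"
proof
  fix y
  obtain n where mn: "m = Suc n" using m by (cases m) auto
  have \<gamma>: "\<gamma> permutes {1..m - 1}" unfolding \<gamma>_def by (rule transpose_last_comp_permutes[OF sp m])
  have sq: "s q = m" by (simp add: q_def permutes_inverses(1)[OF sp])
  have m_in: "m \<in> {1..m}" using m by simp
  then have sm: "s m \<in> {1..m}" by (simp only: permutes_in_image[OF sp])
  have "q \<in> {1..m}" unfolding q_def using m_in by (simp only: permutes_in_image[OF permutes_inv[OF sp]])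
  then have q_lt: "q < m" using sq sm_ne by (cases "q = m") auto
  have s_lt: "s y < m" if "y < m" "y \<noteq> q" for y
  proof (cases "y = 0")
    case False
    then have "s y \<in> {1..m}" using permutes_in_image[OF sp] that by simp
    moreover have "s y \<noteq> m" using that sq permutes_inj[OF sp] by (metis injD)
    ultimately show ?thesis by simp
  qed (use sp m in \<open>simp add: permutes_not_in\<close>)
  show "valpha \<gamma> (Some q) (m - 1) y = s y"
  proof (cases "y < m")
    case True
    show ?thesis
    proof (cases "y = q")
      case False
      then have "s y \<noteq> m" "s y \<noteq> s m" using True sq permutes_inj[OF sp] by (metis injD less_irrefl)+
      then have "\<gamma> y = s y" by (simp add: \<gamma>_def)
      then show ?thesis
        using valpha_ins_shift[of \<gamma> "Some q" n y] True False s_lt[OF True False] mn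
        by (simp add: ins_shift_def)
    qed (use valpha_ins_shift[of \<gamma> "Some q" n q] True sq mn in \<open>simp add: ins_shift_def\<close>)
  next
    case ge: False
    show ?thesis
    proof (cases "y = m")
      case True
      have "\<gamma> q = s m" by (simp add: \<gamma>_def sq)
      then show ?thesis using True valpha_new_point(1)[of \<gamma> q n] sm sm_ne mn by (simp add: ins_shift_def)
    next
      case False
      have "y - 1 \<notin> {1..m - 1}" "q \<noteq> y - 1" using ge False q_lt by auto
      moreover have "ins_shift n (y - 1) = y" using ge False mn by (simp add: ins_shift_def)
      moreover have "s y = y" using ge False by (intro permutes_not_in[OF sp]) simp
      ultimately show ?thesis
        using valpha_ins_shift[of \<gamma> "Some q" n "y - 1"] permutes_not_in[OF \<gamma>] mn by simp
    qed
  qed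
qed

lemma mcycle_valpha_decomposition:
  assumes m: "2 \<le> m" and s: "is_mcycle m s"
  obtains \<gamma> q where "\<gamma> permutes {1..m - 1}" "q \<in> {1..m - 1}" "valpha \<gamma> (Some q) (m - 1) = s"
proof
  have sp: "s permutes {1..m}" using s by (simp add: is_mcycle_def)
  have sm_ne: "s m \<noteq> m" by (rule mcycle_moves_last[OF m s])
  show "Transposition.transpose m (s m) \<circ> s permutes {1..m - 1}"
    using transpose_last_comp_permutes[OF sp] m by simp
  show "valpha (Transposition.transpose m (s m) \<circ> s) (Some (inv s m)) (m - 1) = s"
    using valpha_transpose_last[OF sp sm_ne] m by simp
  have "inv s m \<in> {1..m}" "s (inv s m) = m"
    using permutes_in_image[OF permutes_inv[OF sp], of m] permutes_inverses(1)[OF sp] m by simp_all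
  then show "inv s m \<in> {1..m - 1}" using sm_ne by (cases "inv s m = m") auto
qed

lemma std_cycle_conj_diff_in_vass_cyc_elts:
  assumes m: "2 \<le> m" and s: "s \<in> mcycles m"
  shows "gvec (std_cycle_conj m s) - gvec s \<in> vass_cyc_elts m"
proof -
  have sc: "is_mcycle m s" using s by (simp add: mcycles_def)
  obtain \<gamma> q where \<gamma>: "\<gamma> permutes {1..m - 1}" and q: "q \<in> {1..m - 1}"
    and last: "valpha \<gamma> (Some q) (m - 1) = s"
    by (rule mcycle_valpha_decomposition[OF m sc])
  have all: "valpha \<gamma> (Some q) t \<in> mcycles m" if "t < m" for t
  proof -
    have "valpha \<gamma> (Some q) t \<circ> insertion_perm m t = insertion_perm m t \<circ> s"
      using valpha_intertwine_insertion_perm[OF \<gamma> q that] unfolding last .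
    then show ?thesis
      using is_mcycle_intertwine[OF insertion_perm_permutes[OF that] sc] by (simp add: mcycles_def)
  qed
  have one: "1 \<in> {1..m - 1}" using m by simp
  have "{1..m - 1} = {(\<gamma> ^^ k) 1 | k. True}"
    using all[of "m - 1"] m
    by (intro perm_cycles_transitive[OF \<gamma> _ one, symmetric] transitive_if_valpha_mcycle) auto
  then have v: "{1..m - 1} \<in> perm_cycles (m - 1) \<gamma>"
    unfolding perm_cycles_def using one by blast
  have "vass_elt \<gamma> (Some q) {1..m - 1} = gvec (std_cycle_conj m s) - gvec s"
    using vass_elt_full_cycle[OF \<gamma> q _, unfolded last] m by simp
  moreover have "vass_elt \<gamma> (Some q) {1..m - 1} \<in> vass_cyc_elts m"
  proof -
    have "\<forall>j\<in>{1..m - 1}. valpha \<gamma> (Some q) (j - 1) \<in> mcycles m \<and> valpha \<gamma> (Some q) j \<in> mcycles m"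
      using all m by auto
    moreover have "Some q = None \<or> (\<exists>i\<in>{1..m - 1}. Some q = Some i)" using q by blast
    ultimately show ?thesis unfolding vass_cyc_elts_def using m \<gamma> v by blast
  qed
  ultimately show ?thesis by simp
qed

lemma vass_cyc_elts_eq:
  assumes "2 \<le> m"
  shows "vass_cyc_elts m = (\<lambda>s. gvec (std_cycle_conj m s) - gvec s) ` mcycles m"
  using vass_cyc_elt_is_std_cycle_conj_diff[OF assms] std_cycle_conj_diff_in_vass_cyc_elts[OF assms]
  by blast

lemma span_vass_cyc_elts:
  assumes "0 < m"
  shows "galg.span (vass_cyc_elts m) = galg.span ((\<lambda>s. gvec (std_cycle_conj m s) - gvec s) ` mcycles m)"
proof (cases "2 \<le> m")
  case False
  then have "m = 1" using assms by simp
  then have "std_cycle_conj m s = s" for s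
    by (simp add: std_cycle_conj_def std_cycle_def fun_eq_iff)
  then have "(\<lambda>s. gvec (std_cycle_conj m s) - gvec s) ` mcycles m \<subseteq> galg.span {}"
    using galg.span_zero by auto
  moreover have "vass_cyc_elts m = {}" using False by (simp add: vass_cyc_elts_def)
  ultimately show ?thesis using galg.span_eq by (metis empty_subsetI)
qed (simp add: vass_cyc_elts_eq)

section \<open>The dimension of H_(m)\<close>

lemma dim_H_eq_card_orbits:
  assumes m: "0 < m"
  shows "dim_H m = card (orbits (integer_mod_group m) (mcycles m)
    (cyclic_action (std_cycle_conj m) (mcycles m)))"
  unfolding dim_H_def span_vass_cyc_elts[OF m]
  using std_cycle_conj_mcycles[OF m] std_cycle_conj_funpow_period[OF m] finite_mcycles
  by (intro dim_span_gvec_step_differences[OF m]) auto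

lemma card_orbits_mcycles:
  assumes m: "0 < m"
  shows "m * m * card (orbits (integer_mod_group m) (mcycles m)
      (cyclic_action (std_cycle_conj m) (mcycles m)))
    = (\<Sum>k<m. \<Sum>j<m. card (conjugators m k j))"
proof -
  let ?O = "orbits (integer_mod_group m) (mcycles m) (cyclic_action (std_cycle_conj m) (mcycles m))"
  have "card ?O * m = (\<Sum>k<m. card {s \<in> mcycles m. (std_cycle_conj m ^^ k) s = s})"
    using std_cycle_conj_mcycles[OF m] std_cycle_conj_funpow_period[OF m] finite_mcycles
    by (intro burnside_cyclic[OF m]) auto
  also have "\<dots> = (\<Sum>k<m. card {s \<in> mcycles m. s \<circ> std_cycle m ^^ k = std_cycle m ^^ k \<circ> s})"
    using m by (simp add: std_cycle_conj_funpow_eq_self_iff)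
  finally have "m * m * card ?O = m * (\<Sum>k<m. card {s \<in> mcycles m. s \<circ> std_cycle m ^^ k = std_cycle m ^^ k \<circ> s})"
    by (simp add: ac_simps)
  also have "\<dots> = (\<Sum>k<m. m * card {s \<in> mcycles m. s \<circ> std_cycle m ^^ k = std_cycle m ^^ k \<circ> s})"
    by (rule sum_distrib_left)
  also have "\<dots> = (\<Sum>k<m. \<Sum>j<m. card (conjugators m k j))"
    using card_commuting_mcycles[OF m] by simp
  finally show ?thesis .
qed

theorem theorem16:
  fixes m :: nat
  assumes "1 \<le> m"
  shows "real (dim_H m) =
    (\<Sum>d\<in>{d. d dvd m}. real (totient d) ^ 2 * fact (m div d) * real d ^ (m div d))
      / real m ^ 2"
proof -
  have m: "0 < m" using assms by simp
  have "real m ^ 2 * real (dim_H m) = real (\<Sum>k<m. \<Sum>j<m. card (conjugators m k j))"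
    unfolding dim_H_eq_card_orbits[OF m] card_orbits_mcycles[OF m, symmetric]
    by (simp add: power2_eq_square)
  also have "\<dots> = (\<Sum>d | d dvd m. real (totient d) ^ 2 * fact (m div d) * real d ^ (m div d))"
    by (simp add: sum_card_conjugators[OF m])
  finally show ?thesis using m by (simp add: field_simps)
qed

end
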